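(* Let $|\phi_{\mathrm w}(\theta)\rangle$ be the 2-d Ising whip state on $\Lambda_L$, let $\mathcal B'=\{(L-1,b):0\le b\le L-2\}\cup\{(a,L-1):0\le a\le L-2\}$ (so $|\mathcal B'|=2L-2$) and $\partial X=\sum_{i\in\mathcal B'}X_i$. Then for every $\theta$ with $\cos\theta\neq0$, $$\lim_{L\to\infty}\frac{\langle\partial X\rangle_\theta}{2L-2}=\frac{\cos2\theta+|\cos2\theta|}{2\cos\theta},$$ and the limit is $0$ when $\cos\theta=0$. In particular the limit vanishes exactly on $[\pi/4,3\pi/4]\cup[-3\pi/4,-\pi/4]$ (mod $2\pi$) and is nonzero elsewhere.
   Context: 2-d Ising whip circuit: for $L\ge2$, $\Lambda_L=\{0,\dots,L-1\}^2$, one qubit per site, $N=L^2$. Directed edges $(a,b)\to(a+1,b)$ and $(a,b)\to(a,b+1)$ whenever the target lies in $\Lambda_L$. $\deg^-(v)$ is the number of incoming edges of $v$. For each edge $u\to v$ let $G_{u\to v}(\theta)=\exp(-\mathrm i\,\theta\,Z_uY_v/\deg^-(v))$ with Pauli matrices $X,Y,Z$. The whip state is $|\phi_{\mathrm w}(\theta)\rangle=\prod G_{u\to v}(\theta)|+\rangle^{\otimes N}$, $|+\rangle=(|0\rangle+|1\rangle)/\sqrt2$, with gates applied in order of increasing $a+b$ of the target $v=(a,b)$. $\langle A\rangle_\theta=\langle\phi_{\mathrm w}(\theta)|A|\phi_{\mathrm w}(\theta)\rangle$. *)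

theory Defs
  imports Complex_Main
begin

type_synonym site = "nat \<times> nat"
type_synonym config = "site \<Rightarrow> bool"
type_synonym qstate = "config \<Rightarrow> complex"

definition lattice :: "nat \<Rightarrow> site set" where
  "lattice L = {0..<L} \<times> {0..<L}"

text \<open>Computational basis of the N = L^2 qubits: bit strings supported on the lattice.\<close>
definition configs :: "nat \<Rightarrow> config set" where
  "configs L = {x. \<forall>p. x p \<longrightarrow> p \<in> lattice L}"

definition flip :: "site \<Rightarrow> config \<Rightarrow> config" where
  "flip i x = x(i := \<not> x i)"

text \<open>Single-qubit Paulis acting on state vectors (amplitude functions).
  Basis convention: x i = False is |0>, x i = True is |1>.\<close>
definition pauliX :: "site \<Rightarrow> qstate \<Rightarrow> qstate" where
  "pauliX i \<psi> = (\<lambda>x. \<psi> (flip i x))"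

definition pauliZ :: "site \<Rightarrow> qstate \<Rightarrow> qstate" where
  "pauliZ i \<psi> = (\<lambda>x. (if x i then -1 else 1) * \<psi> x)"

text \<open>Y|0> = i|1>, Y|1> = -i|0>.\<close>
definition pauliY :: "site \<Rightarrow> qstate \<Rightarrow> qstate" where
  "pauliY i \<psi> = (\<lambda>x. (if x i then \<i> else - \<i>) * \<psi> (flip i x))"

definition indeg :: "site \<Rightarrow> nat" where
  "indeg v = (if fst v > 0 then 1 else 0) + (if snd v > 0 then 1 else 0)"

text \<open>G_{u->v}(theta) = exp(-i theta Z_u Y_v / deg v). Since (Z_u Y_v)^2 = 1 (u /= v),
  this exponential equals cos(alpha) 1 - i sin(alpha) Z_u Y_v with alpha = theta/deg v.\<close>
definition gate :: "real \<Rightarrow> site \<times> site \<Rightarrow> qstate \<Rightarrow> qstate" where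
  "gate \<theta> e \<psi> = (let u = fst e; v = snd e; \<alpha> = \<theta> / real (indeg v) in
     (\<lambda>x. complex_of_real (cos \<alpha>) * \<psi> x
          - \<i> * complex_of_real (sin \<alpha>) * pauliZ u (pauliY v \<psi>) x))"

text \<open>Incoming edges of target v = (a,b) (targets always lie in the lattice).\<close>
definition in_edges :: "site \<Rightarrow> (site \<times> site) list" where
  "in_edges v = (let a = fst v; b = snd v in
     (if a \<ge> 1 then [((a - 1, b), v)] else []) @ (if b \<ge> 1 then [((a, b - 1), v)] else []))"

definition whip_edges :: "nat \<Rightarrow> (site \<times> site) list" where
  "whip_edges L = concat (map (\<lambda>k. concat (map (\<lambda>a. in_edges (a, k - a))
       (filter (\<lambda>a. a \<le> k \<and> a < L \<and> k - a < L) [0..<L]))) [1..<2 * L - 1])"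

definition plus_state :: "nat \<Rightarrow> qstate" where
  "plus_state L = (\<lambda>x. if x \<in> configs L then complex_of_real ((1 / sqrt 2) ^ (L * L)) else 0)"

text \<open>Whip state: gates applied in list order (first element applied first).\<close>
definition whip_state :: "nat \<Rightarrow> real \<Rightarrow> qstate" where
  "whip_state L \<theta> = fold (gate \<theta>) (whip_edges L) (plus_state L)"

definition expect :: "nat \<Rightarrow> qstate \<Rightarrow> (qstate \<Rightarrow> qstate) \<Rightarrow> complex" where
  "expect L \<psi> A = (\<Sum>x\<in>configs L. cnj (\<psi> x) * A \<psi> x)"

definition boundary' :: "nat \<Rightarrow> site set" where
  "boundary' L = {(L - 1, b) | b. b \<le> L - 2} \<union> {(a, L - 1) | a. a \<le> L - 2}"

definition boundaryX :: "nat \<Rightarrow> real \<Rightarrow> complex" where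
  "boundaryX L \<theta> = (\<Sum>i\<in>boundary' L. expect L (whip_state L \<theta>) (pauliX i))"

end

theory Submission
  imports Defs
begin

text \<open>All gates with target v commute, act on v only as a Y-rotation controlled by the Z-value of
  a parent, and every parent of v is complete before the gates of v act (gates are ordered by
  level a + b). Hence the whip state has the real amplitudes prod_v r(x_v, beta_v(x)), where
  r(b, t) are the amplitudes of exp(-i t Y)|+> and beta_v = theta/deg v * (sum of the parent
  spins). Its Born distribution is thus a Bayesian network on the lattice DAG with conditional
  probabilities r^2, and <X_i> is computed by summing out the qubits from the top level down: a
  child of i contributes cos(2 theta/deg), every other qubit above i sums to 1, and what remains
  is the mean of cos(2 beta_i). For i in B' the only child has two parents, giving
  cos theta ((1 + cos 2theta)/2 - (1 - cos 2theta)/2 C), with C the correlation of the two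
  (adjacent) parents of i. The correlations along a level obey
  C'(j, k) = sin^2 2theta * (mean of C over the parents of j and k), whose translation-invariant
  solution is rho^|j - k| with rho = (1 - |cos 2theta|)/(1 + |cos 2theta|); the error decays
  geometrically in the distance to the lattice edge, so the average over B' tends to
  cos theta ((1 + cos 2theta)/2 - (1 - cos 2theta)/2 rho) = (cos 2theta + |cos 2theta|)/(2 cos theta).\<close>

section \<open>Summing out a Bayesian network\<close>

definition configs_on :: "'a set \<Rightarrow> ('a \<Rightarrow> bool) set" where
  "configs_on V = {x. \<forall>p. x p \<longrightarrow> p \<in> V}"

definition parent_closed :: "('a \<Rightarrow> 'a set) \<Rightarrow> 'a set \<Rightarrow> bool" where
  "parent_closed par V \<longleftrightarrow> (\<forall>v\<in>V. par v \<subseteq> V)"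

definition family_local :: "('a \<Rightarrow> 'a set) \<Rightarrow> ('a \<Rightarrow> ('a \<Rightarrow> bool) \<Rightarrow> 'b) \<Rightarrow> bool" where
  "family_local par h \<longleftrightarrow> (\<forall>v x y. (\<forall>w\<in>insert v (par v). x w = y w) \<longrightarrow> h v x = h v y)"

lemma configs_on_empty: "configs_on {} = {\<lambda>_. False}"
  by (auto simp: configs_on_def)

lemma finite_configs_on: "finite V \<Longrightarrow> finite (configs_on V)"
proof -
  assume "finite V"
  have "configs_on V = (\<lambda>S p. p \<in> S) ` Pow V"
  proof
    show "configs_on V \<subseteq> (\<lambda>S p. p \<in> S) ` Pow V"
    proof
      fix x assume "x \<in> configs_on V"
      then have "x = (\<lambda>p. p \<in> {p. x p})" "{p. x p} \<in> Pow V" by (auto simp: configs_on_def)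
      then show "x \<in> (\<lambda>S p. p \<in> S) ` Pow V" by blast
    qed
  qed (auto simp: configs_on_def)
  with \<open>finite V\<close> show ?thesis by simp
qed

lemma parent_closed_insert: "parent_closed par V \<Longrightarrow> par v \<subseteq> V \<Longrightarrow> parent_closed par (insert v V)"
  by (auto simp: parent_closed_def)

lemma parent_closed_Int: "parent_closed par A \<Longrightarrow> parent_closed par B \<Longrightarrow> parent_closed par (A \<inter> B)"
  by (auto simp: parent_closed_def)

lemma sum_configs_on_remove:
  assumes "finite V" "v \<in> V"
  shows "(\<Sum>x\<in>configs_on V. f x) = (\<Sum>x\<in>configs_on (V - {v}). f (x(v := True)) + f (x(v := False)))"
proof -
  let ?W = "configs_on (V - {v})"
  have split: "configs_on V = (\<lambda>x. x(v := True)) ` ?W \<union> (\<lambda>x. x(v := False)) ` ?W"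
  proof
    show "configs_on V \<subseteq> (\<lambda>x. x(v := True)) ` ?W \<union> (\<lambda>x. x(v := False)) ` ?W"
    proof
      fix x assume "x \<in> configs_on V"
      then have x': "x(v := False) \<in> ?W" by (auto simp: configs_on_def)
      have "x = (x(v := False))(v := x v)" by simp
      then have "x \<in> (\<lambda>y. y(v := x v)) ` ?W" using x' by blast
      then show "x \<in> (\<lambda>x. x(v := True)) ` ?W \<union> (\<lambda>x. x(v := False)) ` ?W"
        by (cases "x v") auto
    qed
  qed (use assms in \<open>auto simp: configs_on_def split: if_splits\<close>)
  have inj: "inj_on (\<lambda>x. x(v := b)) ?W" for b
  proof (rule inj_onI)
    fix x y assume "x \<in> ?W" "y \<in> ?W" and eq: "x(v := b) = y(v := b)"
    then have "x v = False" "y v = False" unfolding configs_on_def by blast+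
    show "x = y"
    proof
      fix p show "x p = y p"
        using eq \<open>x v = False\<close> \<open>y v = False\<close> by (cases "p = v") (auto dest: fun_cong[where x=p])
    qed
  qed
  have disjoint: "(\<lambda>x. x(v := True)) ` ?W \<inter> (\<lambda>x. x(v := False)) ` ?W = {}"
  proof (rule equals0I)
    fix y assume "y \<in> (\<lambda>x. x(v := True)) ` ?W \<inter> (\<lambda>x. x(v := False)) ` ?W"
    then obtain x1 x2 where "y = x1(v := True)" "y = x2(v := False)" by blast
    then show False by (metis fun_upd_same)
  qed
  have "(\<Sum>x\<in>configs_on V. f x) = (\<Sum>x\<in>(\<lambda>x. x(v := True)) ` ?W. f x) + (\<Sum>x\<in>(\<lambda>x. x(v := False)) ` ?W. f x)"
    unfolding split by (rule sum.union_disjoint) (use disjoint in \<open>auto simp: finite_configs_on assms(1)\<close>)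
  also have "\<dots> = (\<Sum>x\<in>?W. f (x(v := True))) + (\<Sum>x\<in>?W. f (x(v := False)))"
    using inj by (simp add: sum.reindex)
  finally show ?thesis by (simp add: sum.distrib)
qed

lemma sum_configs_on_eliminate:
  fixes h :: "'a \<Rightarrow> ('a \<Rightarrow> bool) \<Rightarrow> 'b::comm_semiring_1"
  assumes "finite V" "v \<in> V" and childless: "\<forall>w\<in>V. v \<notin> par w" and "family_local par h"
    and F: "\<And>x b. F (x(v := b)) = F x"
  shows "(\<Sum>x\<in>configs_on V. F x * g (x v) * (\<Prod>w\<in>V. h w x)) =
    (\<Sum>x\<in>configs_on (V - {v}). F x * (\<Prod>w\<in>V - {v}. h w x) *
       (g True * h v (x(v := True)) + g False * h v (x(v := False))))"
proof -
  have "h w (x(v := b)) = h w x" if "w \<in> V - {v}" for w x b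
  proof -
    have "\<forall>u\<in>insert w (par w). (x(v := b)) u = x u" using childless that by auto
    then show ?thesis using \<open>family_local par h\<close> unfolding family_local_def by blast
  qed
  then have "(\<Prod>w\<in>V. h w (x(v := b))) = h v (x(v := b)) * (\<Prod>w\<in>V - {v}. h w x)" for x b
    using assms(1,2) by (simp add: prod.remove)
  then show ?thesis
    unfolding sum_configs_on_remove[OF assms(1,2)] F by (simp add: algebra_simps)
qed

lemma obtain_childless_outside:
  fixes rk :: "'a \<Rightarrow> nat"
  assumes rank: "\<And>u v. u \<in> par v \<Longrightarrow> rk u < rk v"
    and "finite (V - U)" "V - U \<noteq> {}" "parent_closed par U"
  obtains v where "v \<in> V - U" "\<forall>w\<in>V. v \<notin> par w"
proof -
  have "Max (rk ` (V - U)) \<in> rk ` (V - U)" using assms(2,3) by simp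
  then obtain v where v: "v \<in> V - U" "rk v = Max (rk ` (V - U))" by force
  have "v \<notin> par w" if "w \<in> V" for w
  proof
    assume "v \<in> par w"
    moreover have "w \<notin> U" using \<open>v \<in> par w\<close> v assms(4) unfolding parent_closed_def by auto
    then have "rk w \<le> rk v" using v assms(2) that by auto
    ultimately show False using rank[of v w] by simp
  qed
  then show ?thesis using that v by blast
qed

lemma sum_configs_on_marginalize:
  fixes h :: "'a \<Rightarrow> ('a \<Rightarrow> bool) \<Rightarrow> 'b::comm_semiring_1" and rk :: "'a \<Rightarrow> nat"
  assumes rank: "\<And>u v. u \<in> par v \<Longrightarrow> rk u < rk v"
    and "finite V" "parent_closed par V" "U \<subseteq> V" "parent_closed par U" "family_local par h"
    and F: "\<And>x y. (\<forall>w\<in>U. x w = y w) \<Longrightarrow> F x = F y"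
    and total: "\<And>v x. v \<in> V - U \<Longrightarrow> h v (x(v := True)) + h v (x(v := False)) = \<kappa> v"
  shows "(\<Sum>x\<in>configs_on V. F x * (\<Prod>w\<in>V. h w x)) = (\<Prod>v\<in>V - U. \<kappa> v) * (\<Sum>x\<in>configs_on U. F x * (\<Prod>w\<in>U. h w x))"
  using assms(2-)
proof (induction "card (V - U)" arbitrary: V)
  case 0
  then have "V = U" using finite_subset by fastforce
  then show ?case by simp
next
  case (Suc n)
  have fin: "finite (V - U)" "V - U \<noteq> {}" using Suc by auto
  obtain v where v: "v \<in> V - U" and childless: "\<forall>w\<in>V. v \<notin> par w"
    by (rule obtain_childless_outside[where rk = rk, OF rank fin Suc.prems(4)])
  have "(\<Sum>x\<in>configs_on V. F x * (\<Prod>w\<in>V. h w x)) =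
        (\<Sum>x\<in>configs_on (V - {v}). F x * (\<Prod>w\<in>V - {v}. h w x) * (h v (x(v := True)) + h v (x(v := False))))"
  proof -
    have "F (x(v := b)) = F x" for x b using Suc.prems(6) v by auto
    then show ?thesis
      using sum_configs_on_eliminate[of V v par h F "\<lambda>_. 1"] v childless Suc.prems(1,5) by simp
  qed
  also have "\<dots> = \<kappa> v * (\<Sum>x\<in>configs_on (V - {v}). F x * (\<Prod>w\<in>V - {v}. h w x))"
    using Suc.prems(7) v by (simp add: sum_distrib_left algebra_simps)
  also have "(\<Sum>x\<in>configs_on (V - {v}). F x * (\<Prod>w\<in>V - {v}. h w x))
      = (\<Prod>v\<in>V - {v} - U. \<kappa> v) * (\<Sum>x\<in>configs_on U. F x * (\<Prod>w\<in>U. h w x))"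
  proof (rule Suc.hyps)
    show "n = card (V - {v} - U)" using Suc.hyps(2) v fin
      by (simp add: Diff_insert2[symmetric] card_Diff_singleton insert_Diff_single)
    show "parent_closed par (V - {v})" using Suc.prems(2) childless unfolding parent_closed_def by auto
  qed (use Suc.prems(1,3,4,5,6,7) v in auto)
  also have "\<kappa> v * ((\<Prod>v\<in>V - {v} - U. \<kappa> v) * X) = (\<Prod>v\<in>V - U. \<kappa> v) * X" for X
  proof -
    have "V - {v} - U = (V - U) - {v}" by auto
    then show ?thesis using v fin by (simp add: prod.remove mult.assoc)
  qed
  finally show ?case .
qed

section \<open>Product form of the whip state\<close>

definition spin :: "bool \<Rightarrow> real" where
  "spin b = (if b then -1 else 1)"

text \<open>Amplitude of the basis state b in exp(-i t Y)|+>.\<close>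
definition rot_amp :: "bool \<Rightarrow> real \<Rightarrow> real" where
  "rot_amp b t = (cos t + (if b then 1 else -1) * sin t) / sqrt 2"

definition partial_angle :: "real \<Rightarrow> (site \<times> site) list \<Rightarrow> site \<Rightarrow> config \<Rightarrow> real" where
  "partial_angle \<theta> es v x =
     (\<Sum>e\<leftarrow>filter (\<lambda>e. snd e = v) es. \<theta> / real (indeg v) * spin (x (fst e)))"

definition rotated_state :: "nat \<Rightarrow> real \<Rightarrow> (site \<times> site) list \<Rightarrow> qstate" where
  "rotated_state L \<theta> es = (\<lambda>x. if x \<in> configs L
     then complex_of_real (\<Prod>v\<in>lattice L. rot_amp (x v) (partial_angle \<theta> es v x)) else 0)"

lemma finite_lattice [simp]: "finite (lattice L)"
  by (simp add: lattice_def)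

lemma card_lattice: "card (lattice L) = L * L"
  by (simp add: lattice_def)

lemma flip_in_configs_iff: "v \<in> lattice L \<Longrightarrow> flip v x \<in> configs L \<longleftrightarrow> x \<in> configs L"
  unfolding configs_def flip_def by (auto split: if_splits)

lemma partial_angle_flip:
  "\<forall>e\<in>set es. fst e \<noteq> v \<Longrightarrow> partial_angle \<theta> es w (flip v x) = partial_angle \<theta> es w x"
  unfolding partial_angle_def flip_def by (induction es) auto

lemma partial_angle_snoc:
  "partial_angle \<theta> (es @ [(u, v)]) w x =
     partial_angle \<theta> es w x + (if w = v then \<theta> / real (indeg v) * spin (x u) else 0)"
  unfolding partial_angle_def by auto

lemma rot_amp_rotate:
  "cos a * rot_amp b t + sin a * spin c * (if b then 1 else -1) * rot_amp (\<not> b) t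
     = rot_amp b (t + a * spin c)"
  unfolding rot_amp_def spin_def
  by (cases b; cases c) (auto simp: sin_add cos_add sin_diff cos_diff field_simps)

lemma gate_apply:
  "gate \<theta> (u, v) \<psi> x = complex_of_real (cos (\<theta> / real (indeg v))) * \<psi> x
     + complex_of_real (sin (\<theta> / real (indeg v)) * spin (x u) * (if x v then 1 else -1)) * \<psi> (flip v x)"
  by (cases "x u"; cases "x v") (simp_all add: gate_def pauliZ_def pauliY_def spin_def Let_def algebra_simps)

text \<open>The flip of qubit v in Y_v leaves the factors of the other qubits unchanged as long as v
  has not yet served as a control.\<close>
lemma gate_rotated_state:
  assumes v: "v \<in> lattice L" and "u \<noteq> v" and not_control: "\<forall>e\<in>set es. fst e \<noteq> v"
  shows "gate \<theta> (u, v) (rotated_state L \<theta> es) = rotated_state L \<theta> (es @ [(u, v)])"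
proof
  fix x
  define a where "a = \<theta> / real (indeg v)"
  define t where "t = partial_angle \<theta> es v x"
  define rest where "rest = (\<Prod>w\<in>lattice L - {v}. rot_amp (x w) (partial_angle \<theta> es w x))"
  show "gate \<theta> (u, v) (rotated_state L \<theta> es) x = rotated_state L \<theta> (es @ [(u, v)]) x"
  proof (cases "x \<in> configs L")
    case False
    then show ?thesis
      using flip_in_configs_iff[OF v, of x] by (simp add: gate_apply rotated_state_def)
  next
    case True
    have amp_x: "(\<Prod>w\<in>lattice L. rot_amp (x w) (partial_angle \<theta> es w x)) = rot_amp (x v) t * rest"
      unfolding rest_def t_def using v by (simp add: prod.remove)
    have "(\<Prod>w\<in>lattice L. rot_amp (flip v x w) (partial_angle \<theta> es w (flip v x)))
        = (\<Prod>w\<in>lattice L. rot_amp (flip v x w) (partial_angle \<theta> es w x))"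
      using partial_angle_flip[OF not_control] by simp
    also have "\<dots> = rot_amp (\<not> x v) t * rest"
      unfolding rest_def t_def using v by (simp add: prod.remove flip_def)
    finally have amp_flip:
      "(\<Prod>w\<in>lattice L. rot_amp (flip v x w) (partial_angle \<theta> es w (flip v x))) = rot_amp (\<not> x v) t * rest" .
    have "(\<Prod>w\<in>lattice L - {v}. rot_amp (x w) (partial_angle \<theta> (es @ [(u, v)]) w x)) = rest"
      unfolding rest_def by (rule prod.cong) (auto simp: partial_angle_snoc)
    then have amp_new: "(\<Prod>w\<in>lattice L. rot_amp (x w) (partial_angle \<theta> (es @ [(u, v)]) w x))
        = rot_amp (x v) (t + a * spin (x u)) * rest"
      using v by (simp add: prod.remove partial_angle_snoc t_def a_def)
    have "gate \<theta> (u, v) (rotated_state L \<theta> es) x = complex_of_real ((cos a * rot_amp (x v) t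
        + sin a * spin (x u) * (if x v then 1 else -1) * rot_amp (\<not> x v) t) * rest)"
      using True flip_in_configs_iff[OF v, of x] amp_x amp_flip
      by (simp add: gate_apply rotated_state_def a_def algebra_simps)
    then show ?thesis
      using True amp_new by (simp add: rotated_state_def rot_amp_rotate)
  qed
qed

definition level :: "site \<Rightarrow> nat" where
  "level v = fst v + snd v"

lemma mem_in_edges_iff:
  "e \<in> set (in_edges w) \<longleftrightarrow> snd e = w \<and>
     ((fst w \<ge> 1 \<and> fst e = (fst w - 1, snd w)) \<or> (snd w \<ge> 1 \<and> fst e = (fst w, snd w - 1)))"
  by (cases e; cases w) (auto simp: in_edges_def Let_def)

lemma mem_whip_edges_iff:
  "e \<in> set (whip_edges L) \<longleftrightarrow> snd e \<in> lattice L \<and> snd e \<noteq> (0, 0) \<and> e \<in> set (in_edges (snd e))"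
proof -
  obtain u a b where e: "e = (u, (a, b))" by (metis prod.collapse)
  have "e \<in> set (whip_edges L) \<longleftrightarrow> (\<exists>k a'. 1 \<le> k \<and> k < 2 * L - 1 \<and> a' \<le> k \<and> a' < L \<and> k - a' < L
          \<and> e \<in> set (in_edges (a', k - a')))"
    by (auto simp: whip_edges_def)
  also have "\<dots> \<longleftrightarrow> (a, b) \<in> lattice L \<and> (a, b) \<noteq> (0, 0) \<and> e \<in> set (in_edges (a, b))"
  proof
    assume "\<exists>k a'. 1 \<le> k \<and> k < 2 * L - 1 \<and> a' \<le> k \<and> a' < L \<and> k - a' < L \<and> e \<in> set (in_edges (a', k - a'))"
    then obtain k a' where k: "1 \<le> k" "a' \<le> k" "a' < L" "k - a' < L" "e \<in> set (in_edges (a', k - a'))"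
      by blast
    then have "(a, b) = (a', k - a')" using mem_in_edges_iff[of e "(a', k - a')"] e by auto
    with k show "(a, b) \<in> lattice L \<and> (a, b) \<noteq> (0, 0) \<and> e \<in> set (in_edges (a, b))"
      by (auto simp: lattice_def)
  next
    assume "(a, b) \<in> lattice L \<and> (a, b) \<noteq> (0, 0) \<and> e \<in> set (in_edges (a, b))"
    then show "\<exists>k a'. 1 \<le> k \<and> k < 2 * L - 1 \<and> a' \<le> k \<and> a' < L \<and> k - a' < L \<and> e \<in> set (in_edges (a', k - a'))"
      by (intro exI[of _ "a + b"] exI[of _ a]) (auto simp: lattice_def)
  qed
  finally show ?thesis using e by simp
qed

lemma whip_edge_levels:
  "e \<in> set (whip_edges L) \<Longrightarrow> fst e \<in> lattice L \<and> snd e \<in> lattice L \<and> level (fst e) < level (snd e)"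
  unfolding mem_whip_edges_iff mem_in_edges_iff by (auto simp: lattice_def level_def)

lemma sorted_wrt_concat_key:
  assumes "sorted_wrt (<) ks" and "\<And>k y. k \<in> set ks \<Longrightarrow> y \<in> set (F k) \<Longrightarrow> key y = (k::nat)"
  shows "sorted_wrt (\<lambda>x y. key x \<le> key y) (concat (map F ks))"
  using assms
proof (induction ks)
  case (Cons k ks)
  have "sorted_wrt (\<lambda>x y. key x \<le> key y) (F k)"
    by (rule sorted_wrt_mono_rel[OF _ sorted_wrt_true]) (use Cons.prems(2) in fastforce)
  moreover have "\<forall>x\<in>set (F k). \<forall>y\<in>set (concat (map F ks)). key x \<le> key y"
    using Cons.prems by fastforce
  ultimately show ?case using Cons by (simp add: sorted_wrt_append)
qed simp

lemma whip_edges_sorted: "sorted_wrt (\<lambda>e e'. level (snd e) \<le> level (snd e')) (whip_edges L)"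
  unfolding whip_edges_def
  by (rule sorted_wrt_concat_key) (auto simp: mem_in_edges_iff level_def)

lemma fold_gate_rotated_state:
  assumes "\<forall>e\<in>set es. fst e \<in> lattice L \<and> snd e \<in> lattice L \<and> level (fst e) < level (snd e)"
    and "sorted_wrt (\<lambda>e e'. level (snd e) \<le> level (snd e')) es"
  shows "fold (gate \<theta>) es (rotated_state L \<theta> []) = rotated_state L \<theta> es"
  using assms
proof (induction es rule: rev_induct)
  case (snoc e es)
  obtain u v where e: "e = (u, v)" by (metis prod.collapse)
  have "fst e' \<noteq> v" if "e' \<in> set es" for e'
  proof -
    have "level (snd e') \<le> level v" "level (fst e') < level (snd e')"
      using snoc.prems e that by (auto simp: sorted_wrt_append)
    then show ?thesis by auto
  qed
  moreover have "v \<in> lattice L" "u \<noteq> v"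
    using snoc.prems e by auto
  moreover have "fold (gate \<theta>) es (rotated_state L \<theta> []) = rotated_state L \<theta> es"
    using snoc by (auto simp: sorted_wrt_append)
  ultimately show ?case using e gate_rotated_state by simp
qed simp

lemma plus_state_eq_rotated_state: "plus_state L = rotated_state L \<theta> []"
  by (auto simp: plus_state_def rotated_state_def partial_angle_def rot_amp_def card_lattice power_divide)

lemma concat_map_if_eq:
  "distinct xs \<Longrightarrow> concat (map (\<lambda>a. if a = a0 then X else []) xs) = (if a0 \<in> set xs then X else [])"
  by (induction xs) auto

lemma filter_target_in_edges: "filter (\<lambda>e. snd e = v) (in_edges w) = (if w = v then in_edges v else [])"
  by (auto simp: filter_id_conv filter_empty_conv mem_in_edges_iff)

lemma filter_target_whip_edges:
  assumes "v \<in> lattice L"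
  shows "filter (\<lambda>e. snd e = v) (whip_edges L) = in_edges v"
proof -
  obtain a b where v: "v = (a, b)" by (metis prod.collapse)
  define row where "row k = filter (\<lambda>a. a \<le> k \<and> a < L \<and> k - a < L) [0..<L]" for k
  have "filter (\<lambda>e. snd e = v) (whip_edges L) = concat (map (\<lambda>k. concat (map (\<lambda>a'.
      if a' = a then (if k = a + b then in_edges v else []) else []) (row k))) [1..<2 * L - 1])"
    unfolding whip_edges_def filter_concat map_map o_def filter_target_in_edges row_def
    by (intro arg_cong[where f=concat] map_cong refl) (auto simp: v)
  also have "\<dots> = concat (map (\<lambda>k. if k = a + b then in_edges v else []) [1..<2 * L - 1])"
    using assms v by (intro arg_cong[where f=concat] map_cong refl)
      (auto simp: concat_map_if_eq row_def lattice_def)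
  also have "\<dots> = in_edges v"
  proof (cases "a + b = 0")
    case True
    then show ?thesis by (auto simp: v in_edges_def)
  next
    case False
    then have "a + b \<in> set [1..<2 * L - 1]" using assms v by (auto simp: lattice_def)
    then show ?thesis by (simp add: concat_map_if_eq)
  qed
  finally show ?thesis .
qed

definition angle :: "real \<Rightarrow> site \<Rightarrow> config \<Rightarrow> real" where
  "angle \<theta> v x = \<theta> / real (indeg v) * (\<Sum>e\<leftarrow>in_edges v. spin (x (fst e)))"

theorem whip_state_product:
  "whip_state L \<theta> = (\<lambda>x. if x \<in> configs L
     then complex_of_real (\<Prod>v\<in>lattice L. rot_amp (x v) (angle \<theta> v x)) else 0)"
proof -
  have "whip_state L \<theta> = rotated_state L \<theta> (whip_edges L)"
    unfolding whip_state_def plus_state_eq_rotated_state[of L \<theta>]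
    by (rule fold_gate_rotated_state) (use whip_edge_levels whip_edges_sorted in auto)
  also have "\<dots> = (\<lambda>x. if x \<in> configs L
      then complex_of_real (\<Prod>v\<in>lattice L. rot_amp (x v) (angle \<theta> v x)) else 0)"
    unfolding rotated_state_def
    by (intro ext if_cong refl arg_cong[where f=complex_of_real] prod.cong)
      (simp add: partial_angle_def angle_def filter_target_whip_edges sum_list_const_mult[symmetric] o_def)
  finally show ?thesis .
qed

section \<open>The Born distribution of the whip state\<close>

definition parents :: "site \<Rightarrow> site set" where
  "parents v = fst ` set (in_edges v)"

lemma parents_iff:
  "u \<in> parents v \<longleftrightarrow> (fst v \<ge> 1 \<and> u = (fst v - 1, snd v)) \<or> (snd v \<ge> 1 \<and> u = (fst v, snd v - 1))"
  by (cases v) (force simp: parents_def in_edges_def Let_def)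

lemma level_parent: "u \<in> parents v \<Longrightarrow> level u + 1 = level v"
  by (auto simp: parents_iff level_def)

lemma parent_le: "u \<in> parents v \<Longrightarrow> fst u \<le> fst v \<and> snd u \<le> snd v \<and> u \<noteq> v"
  by (auto simp: parents_iff prod_eq_iff)

lemma not_parent_self: "v \<notin> parents v"
  using level_parent by fastforce

lemma configs_eq_configs_on: "configs L = configs_on (lattice L)"
  by (simp add: configs_def configs_on_def)

lemma angle_cong: "(\<forall>w\<in>parents v. x w = y w) \<Longrightarrow> angle \<theta> v x = angle \<theta> v y"
  unfolding angle_def parents_def
  by (intro arg_cong[where f="\<lambda>s. \<theta> / real (indeg v) * s"] arg_cong[where f=sum_list] map_cong) auto

lemma angle_upd_nonparent: "u \<notin> parents v \<Longrightarrow> angle \<theta> v (x(u := b)) = angle \<theta> v x"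
  by (rule angle_cong) auto

lemma angle_flip_nonparent: "i \<notin> parents v \<Longrightarrow> angle \<theta> v (flip i x) = angle \<theta> v x"
  by (rule angle_cong) (auto simp: flip_def)

lemma angle_flip_parent:
  "i \<in> parents v \<Longrightarrow> angle \<theta> v (flip i x) = angle \<theta> v x + \<theta> / real (indeg v) * (spin (\<not> x i) - spin (x i))"
  by (cases v) (auto simp: parents_def in_edges_def angle_def flip_def algebra_simps split: if_splits)

definition cond_prob :: "real \<Rightarrow> site \<Rightarrow> config \<Rightarrow> real" where
  "cond_prob \<theta> v x = (rot_amp (x v) (angle \<theta> v x))\<^sup>2"

lemma family_local_cond_prob: "family_local parents (cond_prob \<theta>)"
  unfolding family_local_def cond_prob_def
proof (intro allI impI)
  fix v and x y :: config
  assume "\<forall>w\<in>insert v (parents v). x w = y w"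
  then show "(rot_amp (x v) (angle \<theta> v x))\<^sup>2 = (rot_amp (y v) (angle \<theta> v y))\<^sup>2"
    using angle_cong[of v x y \<theta>] by auto
qed

lemma rot_amp_sq_sum: "(rot_amp True t)\<^sup>2 + (rot_amp False t)\<^sup>2 = 1"
  by (simp add: rot_amp_def power2_eq_square field_simps)

lemma cond_prob_total: "cond_prob \<theta> v (x(v := True)) + cond_prob \<theta> v (x(v := False)) = 1"
  by (simp add: cond_prob_def angle_upd_nonparent not_parent_self rot_amp_sq_sum)

lemma sum_cond_prob_marginal:
  assumes "finite V" "parent_closed parents V" "U \<subseteq> V" "parent_closed parents U"
    and "\<And>x y. (\<forall>w\<in>U. x w = y w) \<Longrightarrow> F x = F y"
  shows "(\<Sum>x\<in>configs_on V. F x * (\<Prod>w\<in>V. cond_prob \<theta> w x))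
       = (\<Sum>x\<in>configs_on U. F x * (\<Prod>w\<in>U. cond_prob \<theta> w x))"
proof -
  have "u \<in> parents v \<Longrightarrow> level u < level v" for u v
    using level_parent by fastforce
  then show ?thesis
    using sum_configs_on_marginalize[where rk = level and \<kappa> = "\<lambda>_. 1", OF _ assms(1-4)
        family_local_cond_prob assms(5)] cond_prob_total by simp
qed

lemma sum_cond_prob_one:
  assumes "finite V" "parent_closed parents V"
  shows "(\<Sum>x\<in>configs_on V. \<Prod>w\<in>V. cond_prob \<theta> w x) = 1"
  using sum_cond_prob_marginal[OF assms, of "{}" "\<lambda>_. 1" \<theta>]
  by (simp add: parent_closed_def configs_on_empty)

lemma sum_cond_prob_marginal_common:
  assumes "finite V" "parent_closed parents V" "finite V'" "parent_closed parents V'"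
    and "U \<subseteq> V" "U \<subseteq> V'" and F: "\<And>x y. (\<forall>w\<in>U. x w = y w) \<Longrightarrow> F x = F y"
  shows "(\<Sum>x\<in>configs_on V. F x * (\<Prod>w\<in>V. cond_prob \<theta> w x))
       = (\<Sum>x\<in>configs_on V'. F x * (\<Prod>w\<in>V'. cond_prob \<theta> w x))"
proof -
  have F': "F x = F y" if "\<forall>w\<in>V \<inter> V'. x w = y w" for x y
    using F that assms(5,6) by blast
  have "(\<Sum>x\<in>configs_on V. F x * (\<Prod>w\<in>V. cond_prob \<theta> w x))
      = (\<Sum>x\<in>configs_on (V \<inter> V'). F x * (\<Prod>w\<in>V \<inter> V'. cond_prob \<theta> w x))"
    by (rule sum_cond_prob_marginal) (use assms F' parent_closed_Int in auto)
  also have "\<dots> = (\<Sum>x\<in>configs_on V'. F x * (\<Prod>w\<in>V'. cond_prob \<theta> w x))"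
    by (rule sum_cond_prob_marginal[symmetric]) (use assms F' parent_closed_Int in auto)
  finally show ?thesis .
qed

section \<open>Expectation of a single X\<close>

definition quadrant :: "site \<Rightarrow> site set" where
  "quadrant i = {v. fst v \<le> fst i \<and> snd v \<le> snd i}"

definition child_factor :: "real \<Rightarrow> site \<Rightarrow> site \<Rightarrow> real" where
  "child_factor \<theta> i v = (if i \<in> parents v then cos (2 * \<theta> / real (indeg v)) else 1)"

text \<open>The factor of site v in psi(x) psi(flip i x), the summand of the expectation of X_i.\<close>
definition overlap :: "real \<Rightarrow> site \<Rightarrow> site \<Rightarrow> config \<Rightarrow> real" where
  "overlap \<theta> i v x = rot_amp (x v) (angle \<theta> v x) * rot_amp (flip i x v) (angle \<theta> v (flip i x))"

lemma finite_quadrant: "finite (quadrant i)"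
  by (rule finite_subset[of _ "{0..fst i} \<times> {0..snd i}"]) (auto simp: quadrant_def)

lemma parent_closed_quadrant: "parent_closed parents (quadrant i)"
  by (auto simp: parent_closed_def quadrant_def dest!: parent_le)

lemma parent_closed_quadrant_minus: "parent_closed parents (quadrant i - {i})"
  by (auto simp: parent_closed_def quadrant_def dest!: parent_le)

lemma parent_closed_lattice: "parent_closed parents (lattice L)"
  by (auto simp: parent_closed_def lattice_def dest!: parent_le)

lemma quadrant_subset_lattice: "i \<in> lattice L \<Longrightarrow> quadrant i \<subseteq> lattice L"
  by (auto simp: quadrant_def lattice_def)

lemma rot_amp_cross: "rot_amp True t * rot_amp True t' + rot_amp False t * rot_amp False t' = cos (t - t')"
  by (simp add: rot_amp_def cos_diff field_simps)

lemma rot_amp_swap: "rot_amp True t * rot_amp False t + rot_amp False t * rot_amp True t = cos (2 * t)"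
  by (simp only: cos_double) (simp add: rot_amp_def power2_eq_square field_simps)

lemma family_local_overlap: "family_local parents (overlap \<theta> i)"
  unfolding family_local_def
proof (intro allI impI)
  fix v and x y :: config
  assume same: "\<forall>w\<in>insert v (parents v). x w = y w"
  then have "angle \<theta> v x = angle \<theta> v y" "angle \<theta> v (flip i x) = angle \<theta> v (flip i y)"
    by (auto intro!: angle_cong simp: flip_def)
  moreover have "flip i x v = flip i y v" "x v = y v"
    using same by (auto simp: flip_def)
  ultimately show "overlap \<theta> i v x = overlap \<theta> i v y"
    by (simp add: overlap_def)
qed

lemma overlap_nonchild: "v \<noteq> i \<Longrightarrow> i \<notin> parents v \<Longrightarrow> overlap \<theta> i v x = cond_prob \<theta> v x"
  using angle_flip_nonparent[of i v \<theta> x] by (simp add: overlap_def cond_prob_def flip_def power2_eq_square)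

text \<open>Flipping the parent i shifts the angle of v by 2 theta/deg v in absolute value, and the
  amplitudes at two angles have overlap cos of their difference.\<close>
lemma overlap_child_total:
  assumes "v \<noteq> i" "i \<in> parents v"
  shows "overlap \<theta> i v (x(v := True)) + overlap \<theta> i v (x(v := False)) = child_factor \<theta> i v"
proof -
  define t where "t = angle \<theta> v x"
  define d where "d = \<theta> / real (indeg v) * (spin (\<not> x i) - spin (x i))"
  have "flip i (x(v := b)) = (flip i x)(v := b)" for b
    using assms by (intro ext) (auto simp: flip_def)
  then have "overlap \<theta> i v (x(v := b)) = rot_amp b t * rot_amp b (t + d)" for b
    using angle_flip_parent[OF assms(2), of \<theta> x] assms(1)
    by (simp add: overlap_def angle_upd_nonparent not_parent_self t_def d_def flip_def)
  then have "overlap \<theta> i v (x(v := True)) + overlap \<theta> i v (x(v := False)) = cos (t - (t + d))"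
    by (simp add: rot_amp_cross)
  also have "\<dots> = cos (2 * \<theta> / real (indeg v))"
    by (cases "x i") (simp_all add: d_def spin_def ac_simps)
  finally show ?thesis using assms by (simp add: child_factor_def)
qed

lemma overlap_self_total:
  "overlap \<theta> i i (x(i := True)) + overlap \<theta> i i (x(i := False)) = cos (2 * angle \<theta> i x)"
proof -
  have "flip i (x(i := b)) = x(i := \<not> b)" for b
    by (auto simp: flip_def)
  then show ?thesis
    using rot_amp_swap[of "angle \<theta> i x"]
    by (simp add: overlap_def angle_upd_nonparent not_parent_self flip_def)
qed

lemma expect_pauliX_overlap:
  assumes "i \<in> lattice L"
  shows "expect L (whip_state L \<theta>) (pauliX i)
       = complex_of_real (\<Sum>x\<in>configs_on (lattice L). \<Prod>v\<in>lattice L. overlap \<theta> i v x)"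
proof -
  have "cnj (whip_state L \<theta> x) * pauliX i (whip_state L \<theta>) x
      = complex_of_real (\<Prod>v\<in>lattice L. overlap \<theta> i v x)" if "x \<in> configs L" for x
    using that flip_in_configs_iff[OF assms, of x]
    by (simp add: whip_state_product pauliX_def overlap_def prod.distrib)
  then show ?thesis
    unfolding expect_def by (simp add: configs_eq_configs_on)
qed

lemma not_parent_in_quadrant: "w \<in> quadrant i \<Longrightarrow> i \<notin> parents w"
proof
  assume "w \<in> quadrant i" "i \<in> parents w"
  then have "fst i \<le> fst w" "snd i \<le> snd w" "i \<noteq> w" by (simp_all add: parent_le)
  with \<open>w \<in> quadrant i\<close> show False by (simp add: quadrant_def prod_eq_iff)
qed

text \<open>Only the children of i feel the flip of qubit i; all other qubits outside the quadrant
  below i sum out to 1.\<close>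
lemma sum_overlap_lattice:
  assumes "i \<in> lattice L"
  shows "(\<Sum>x\<in>configs_on (lattice L). \<Prod>v\<in>lattice L. overlap \<theta> i v x)
       = (\<Prod>v\<in>lattice L - quadrant i. child_factor \<theta> i v)
         * (\<Sum>x\<in>configs_on (quadrant i). \<Prod>v\<in>quadrant i. overlap \<theta> i v x)"
proof -
  have "(\<Sum>x\<in>configs_on (lattice L). 1 * (\<Prod>v\<in>lattice L. overlap \<theta> i v x))
      = (\<Prod>v\<in>lattice L - quadrant i. child_factor \<theta> i v)
         * (\<Sum>x\<in>configs_on (quadrant i). 1 * (\<Prod>v\<in>quadrant i. overlap \<theta> i v x))"
  proof (rule sum_configs_on_marginalize[OF _ finite_lattice parent_closed_lattice
        quadrant_subset_lattice[OF assms] parent_closed_quadrant family_local_overlap])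
    show "level u < level v" if "u \<in> parents v" for u v
      using level_parent[OF that] by simp
    show "overlap \<theta> i v (x(v := True)) + overlap \<theta> i v (x(v := False)) = child_factor \<theta> i v"
      if "v \<in> lattice L - quadrant i" for v x
    proof -
      have "v \<noteq> i" using that by (auto simp: quadrant_def)
      then show ?thesis
        using overlap_child_total[of v i] overlap_nonchild[of v i] cond_prob_total[of \<theta> v x]
        by (cases "i \<in> parents v") (simp_all add: child_factor_def)
    qed
  qed simp
  then show ?thesis by simp
qed

lemma sum_overlap_quadrant:
  "(\<Sum>x\<in>configs_on (quadrant i). \<Prod>v\<in>quadrant i. overlap \<theta> i v x)
     = (\<Sum>x\<in>configs_on (quadrant i - {i}). cos (2 * angle \<theta> i x) * (\<Prod>w\<in>quadrant i - {i}. cond_prob \<theta> w x))"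
proof -
  have i: "i \<in> quadrant i" by (simp add: quadrant_def)
  have "(\<Sum>x\<in>configs_on (quadrant i). \<Prod>v\<in>quadrant i. overlap \<theta> i v x)
      = (\<Sum>x\<in>configs_on (quadrant i - {i}). (\<Prod>w\<in>quadrant i - {i}. overlap \<theta> i w x)
           * (overlap \<theta> i i (x(i := True)) + overlap \<theta> i i (x(i := False))))"
    using sum_configs_on_eliminate[OF finite_quadrant i _ family_local_overlap, of "\<lambda>_. 1" "\<lambda>_. 1"]
      not_parent_in_quadrant
    by simp
  also have "\<dots> = (\<Sum>x\<in>configs_on (quadrant i - {i}).
      cos (2 * angle \<theta> i x) * (\<Prod>w\<in>quadrant i - {i}. cond_prob \<theta> w x))"
  proof (intro sum.cong refl)
    fix x
    have "(\<Prod>w\<in>quadrant i - {i}. overlap \<theta> i w x) = (\<Prod>w\<in>quadrant i - {i}. cond_prob \<theta> w x)"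
      using not_parent_in_quadrant overlap_nonchild by (intro prod.cong) auto
    then show "(\<Prod>w\<in>quadrant i - {i}. overlap \<theta> i w x)
        * (overlap \<theta> i i (x(i := True)) + overlap \<theta> i i (x(i := False)))
      = cos (2 * angle \<theta> i x) * (\<Prod>w\<in>quadrant i - {i}. cond_prob \<theta> w x)"
      by (simp add: overlap_self_total)
  qed
  finally show ?thesis .
qed

theorem expect_pauliX_quadrant:
  assumes "i \<in> lattice L"
  shows "expect L (whip_state L \<theta>) (pauliX i) = complex_of_real
     ((\<Prod>v\<in>lattice L - quadrant i. child_factor \<theta> i v) *
      (\<Sum>x\<in>configs_on (quadrant i - {i}). cos (2 * angle \<theta> i x) * (\<Prod>w\<in>quadrant i - {i}. cond_prob \<theta> w x)))"
  unfolding expect_pauliX_overlap[OF assms] sum_overlap_lattice[OF assms] sum_overlap_quadrant ..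

section \<open>Spin correlations along a level\<close>

definition levels_upto :: "nat \<Rightarrow> site set" where
  "levels_upto d = {v. level v \<le> d}"

definition level_site :: "nat \<Rightarrow> nat \<Rightarrow> site" where
  "level_site d j = (j, d - j)"

text \<open>Spin correlation of the sites of level d with first coordinates j and k in the Born
  distribution of the whip state, whose density is the product of the cond_prob factors.\<close>
definition corr :: "real \<Rightarrow> nat \<Rightarrow> nat \<Rightarrow> nat \<Rightarrow> real" where
  "corr \<theta> d j k = (\<Sum>x\<in>configs_on (levels_upto d).
     spin (x (level_site d j)) * spin (x (level_site d k)) * (\<Prod>w\<in>levels_upto d. cond_prob \<theta> w x))"

definition parent_positions :: "nat \<Rightarrow> nat \<Rightarrow> nat set" where
  "parent_positions d j = (if 1 \<le> j then {j - 1} else {}) \<union> (if j \<le> d then {j} else {})"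

lemma finite_levels_upto: "finite (levels_upto d)"
  by (rule finite_subset[of _ "{0..d} \<times> {0..d}"]) (auto simp: levels_upto_def level_def)

lemma parent_closed_levels_upto: "parent_closed parents (levels_upto d)"
  by (auto simp: parent_closed_def levels_upto_def dest!: level_parent)

lemma parents_subset_levels_upto: "level v = d + 1 \<Longrightarrow> parents v \<subseteq> levels_upto d"
  using level_parent by (fastforce simp: levels_upto_def)

lemma level_site_in_levels_upto: "j \<le> d \<Longrightarrow> level_site d j \<in> levels_upto d"
  by (simp add: level_site_def levels_upto_def level_def)

lemma level_level_site: "j \<le> d \<Longrightarrow> level (level_site d j) = d"
  by (simp add: level_site_def level_def)

lemma spin_mult_self: "spin b * spin b = 1"
  by (simp add: spin_def)

lemma corr_eq_on:
  assumes "finite V" "parent_closed parents V" "level_site d j \<in> V" "level_site d k \<in> V" "j \<le> d" "k \<le> d"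
  shows "(\<Sum>x\<in>configs_on V. spin (x (level_site d j)) * spin (x (level_site d k)) * (\<Prod>w\<in>V. cond_prob \<theta> w x))
       = corr \<theta> d j k"
  unfolding corr_def
  by (rule sum_cond_prob_marginal_common[where U = "{level_site d j, level_site d k}"])
    (use assms finite_levels_upto parent_closed_levels_upto level_site_in_levels_upto in auto)

lemma corr_self: "j \<le> d \<Longrightarrow> corr \<theta> d j j = 1"
  unfolding corr_def
  using sum_cond_prob_one[OF finite_levels_upto parent_closed_levels_upto]
  by (simp add: spin_mult_self)

lemma sin_double_spin: "sin (2 * (a * spin b)) = spin b * sin (2 * a)"
  by (simp add: spin_def)

lemma sin_double_angle_level_site:
  assumes "j \<le> d + 1"
  shows "sin (2 * angle \<theta> (level_site (d + 1) j) x)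
       = sin (2 * \<theta>) * (\<Sum>j'\<in>parent_positions d j. spin (x (level_site d j'))) / real (card (parent_positions d j))"
proof -
  consider "j = 0" | "j = d + 1" | "1 \<le> j \<and> j \<le> d"
    using assms by linarith
  then show ?thesis
  proof cases
    case 3
    then have "parent_positions d j = {j - 1, j}" "j - 1 \<noteq> j"
      by (auto simp: parent_positions_def)
    then have P: "(\<Sum>j'\<in>parent_positions d j. spin (x (level_site d j')))
        = spin (x (level_site d (j - 1))) + spin (x (level_site d j))"
      "card (parent_positions d j) = 2"
      by simp_all
    have "d + 1 - j \<ge> 1" "d - (j - 1) = d + 1 - j" using 3 by auto
    then have "angle \<theta> (level_site (d + 1) j) x
        = \<theta> / 2 * (spin (x (level_site d (j - 1))) + spin (x (level_site d j)))"
      using 3 by (simp add: angle_def level_site_def in_edges_def indeg_def Let_def)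
    then show ?thesis
      unfolding P by (cases "x (level_site d (j - 1))"; cases "x (level_site d j)")
        (simp_all add: spin_def sin_double)
  qed (simp_all add: angle_def level_site_def in_edges_def indeg_def parent_positions_def sin_double_spin)
qed

lemma spin_weighted_cond_prob:
  "spin True * cond_prob \<theta> v (x(v := True)) + spin False * cond_prob \<theta> v (x(v := False))
     = - sin (2 * angle \<theta> v x)"
proof -
  have "spin True * cond_prob \<theta> v (x(v := True)) + spin False * cond_prob \<theta> v (x(v := False))
      = ((cos t - sin t)\<^sup>2 - (cos t + sin t)\<^sup>2) / 2" if "t = angle \<theta> v x" for t
    using that by (simp add: cond_prob_def angle_upd_nonparent not_parent_self rot_amp_def spin_def power_divide)
  also have "((cos t - sin t)\<^sup>2 - (cos t + sin t)\<^sup>2) / 2 = - sin (2 * t)" for t :: real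
    unfolding sin_double by (simp add: power2_eq_square algebra_simps)
  finally show ?thesis by simp
qed

text \<open>Summing out two distinct sites p, q of level d + 1 replaces their spins by the
  expectations -sin (2 angle) given their parents.\<close>
lemma corr_sum_out_top_level:
  assumes "level p = d + 1" "level q = d + 1" "p \<noteq> q"
  shows "(\<Sum>x\<in>configs_on (levels_upto (d + 1)). spin (x p) * spin (x q) * (\<Prod>w\<in>levels_upto (d + 1). cond_prob \<theta> w x))
       = (\<Sum>x\<in>configs_on (levels_upto d). sin (2 * angle \<theta> p x) * sin (2 * angle \<theta> q x) * (\<Prod>w\<in>levels_upto d. cond_prob \<theta> w x))"
proof -
  define U where "U = insert p (insert q (levels_upto d))"
  have top: "p \<notin> levels_upto d" "q \<notin> levels_upto d"
    using assms by (auto simp: levels_upto_def)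
  have "parent_closed parents U"
    unfolding U_def using parents_subset_levels_upto[OF assms(1)] parents_subset_levels_upto[OF assms(2)]
    by (intro parent_closed_insert parent_closed_levels_upto) auto
  moreover have "finite U" "U \<subseteq> levels_upto (d + 1)"
    using assms finite_levels_upto[of d] by (auto simp: U_def levels_upto_def)
  ultimately have U: "finite U" "parent_closed parents U" "U \<subseteq> levels_upto (d + 1)"
    by blast+
  have childless: "v \<notin> parents w" if "level v = d + 1" "w \<in> U" for v w
    using that assms level_parent[of v w] by (auto simp: U_def levels_upto_def)
  have q_not_parent: "q \<notin> parents p"
    using assms level_parent by fastforce
  have "(\<Sum>x\<in>configs_on (levels_upto (d + 1)). spin (x p) * spin (x q) * (\<Prod>w\<in>levels_upto (d + 1). cond_prob \<theta> w x))
      = (\<Sum>x\<in>configs_on U. spin (x q) * spin (x p) * (\<Prod>w\<in>U. cond_prob \<theta> w x))"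
    by (subst sum_cond_prob_marginal[OF finite_levels_upto parent_closed_levels_upto U(3,2)])
      (auto simp: U_def mult.commute)
  also have "\<dots> = (\<Sum>x\<in>configs_on (U - {p}). spin (x q) * (\<Prod>w\<in>U - {p}. cond_prob \<theta> w x) * (- sin (2 * angle \<theta> p x)))"
    using sum_configs_on_eliminate[OF U(1) _ _ family_local_cond_prob, of p "\<lambda>x. spin (x q)" spin]
      childless[OF assms(1)] assms(3)
    by (simp add: U_def spin_weighted_cond_prob)
  also have "\<dots> = (\<Sum>x\<in>configs_on (U - {p}). (- sin (2 * angle \<theta> p x)) * spin (x q) * (\<Prod>w\<in>U - {p}. cond_prob \<theta> w x))"
    by (simp add: ac_simps)
  also have "\<dots> = (\<Sum>x\<in>configs_on (U - {p} - {q}). (- sin (2 * angle \<theta> p x)) * (\<Prod>w\<in>U - {p} - {q}. cond_prob \<theta> w x) * (- sin (2 * angle \<theta> q x)))"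
    using sum_configs_on_eliminate[of "U - {p}" q parents "cond_prob \<theta>" "\<lambda>x. - sin (2 * angle \<theta> p x)" spin]
      U(1) family_local_cond_prob childless[OF assms(2)] assms(3) angle_upd_nonparent[OF q_not_parent]
    by (simp add: U_def spin_weighted_cond_prob)
  also have "U - {p} - {q} = levels_upto d"
    using top assms(3) by (auto simp: U_def)
  finally show ?thesis by (simp add: ac_simps)
qed

lemma corr_recursion:
  assumes "j \<le> d + 1" "k \<le> d + 1" "j \<noteq> k"
  shows "corr \<theta> (d + 1) j k = (sin (2 * \<theta>))\<^sup>2 * (\<Sum>j'\<in>parent_positions d j. \<Sum>k'\<in>parent_positions d k. corr \<theta> d j' k')
     / real (card (parent_positions d j) * card (parent_positions d k))"
proof -
  have distinct: "level_site (d + 1) j \<noteq> level_site (d + 1) k"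
    using assms by (simp add: level_site_def)
  have "corr \<theta> (d + 1) j k = (\<Sum>x\<in>configs_on (levels_upto d).
      sin (2 * angle \<theta> (level_site (d + 1) j) x) * sin (2 * angle \<theta> (level_site (d + 1) k) x)
      * (\<Prod>w\<in>levels_upto d. cond_prob \<theta> w x))"
    unfolding corr_def using assms by (intro corr_sum_out_top_level distinct) (simp_all add: level_level_site)
  also have "\<dots> = (\<Sum>x\<in>configs_on (levels_upto d). (sin (2 * \<theta>))\<^sup>2
      / real (card (parent_positions d j) * card (parent_positions d k))
      * (\<Sum>j'\<in>parent_positions d j. \<Sum>k'\<in>parent_positions d k.
          spin (x (level_site d j')) * spin (x (level_site d k')) * (\<Prod>w\<in>levels_upto d. cond_prob \<theta> w x)))"
  proof (intro sum.cong refl)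
    fix x :: config
    let ?P = "\<Prod>w\<in>levels_upto d. cond_prob \<theta> w x"
    have "(\<Sum>j'\<in>parent_positions d j. spin (x (level_site d j')))
        * (\<Sum>k'\<in>parent_positions d k. spin (x (level_site d k'))) * ?P
      = (\<Sum>j'\<in>parent_positions d j. \<Sum>k'\<in>parent_positions d k.
          spin (x (level_site d j')) * spin (x (level_site d k')) * ?P)"
      by (simp add: sum_distrib_left sum_distrib_right mult.assoc) (rule sum.swap)
    then show "sin (2 * angle \<theta> (level_site (d + 1) j) x) * sin (2 * angle \<theta> (level_site (d + 1) k) x) * ?P
      = (sin (2 * \<theta>))\<^sup>2 / real (card (parent_positions d j) * card (parent_positions d k))
      * (\<Sum>j'\<in>parent_positions d j. \<Sum>k'\<in>parent_positions d k.
          spin (x (level_site d j')) * spin (x (level_site d k')) * ?P)"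
      unfolding sin_double_angle_level_site[OF assms(1)] sin_double_angle_level_site[OF assms(2)]
      by (simp add: power2_eq_square)
  qed
  also have "\<dots> = (sin (2 * \<theta>))\<^sup>2 / real (card (parent_positions d j) * card (parent_positions d k))
      * (\<Sum>j'\<in>parent_positions d j. \<Sum>k'\<in>parent_positions d k. corr \<theta> d j' k')"
    unfolding sum_distrib_left[symmetric] corr_def
    by (simp add: sum.swap[of _ "configs_on (levels_upto d)"])
  finally show ?thesis by simp
qed

definition gap :: "nat \<Rightarrow> nat \<Rightarrow> nat" where
  "gap j k = (if j \<le> k then k - j else j - k)"

definition edge_dist :: "nat \<Rightarrow> nat \<Rightarrow> nat \<Rightarrow> nat" where
  "edge_dist d j k = min (min j k) (d - max j k)"

lemma card_parent_positions_pos: "j \<le> d + 1 \<Longrightarrow> card (parent_positions d j) > 0"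
  by (auto simp: parent_positions_def card_gt_0_iff)

lemma parent_positions_le: "j \<le> d + 1 \<Longrightarrow> j' \<in> parent_positions d j \<Longrightarrow> j' \<le> d"
  by (auto simp: parent_positions_def split: if_splits)

lemma sin_sq_le_one: "(sin (x::real))\<^sup>2 \<le> 1"
  by (simp add: abs_square_le_1)

lemma abs_corr_le_one: "j \<le> d \<Longrightarrow> k \<le> d \<Longrightarrow> \<bar>corr \<theta> d j k\<bar> \<le> 1"
proof (induction d arbitrary: j k)
  case 0
  then show ?case using corr_self[of 0 0 \<theta>] by simp
next
  case (Suc d)
  show ?case
  proof (cases "j = k")
    case True
    then show ?thesis using corr_self Suc.prems by simp
  next
    case False
    let ?n = "real (card (parent_positions d j) * card (parent_positions d k))"
    have j: "j \<le> d + 1" and k: "k \<le> d + 1" using Suc.prems by auto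
    have "\<bar>\<Sum>j'\<in>parent_positions d j. \<Sum>k'\<in>parent_positions d k. corr \<theta> d j' k'\<bar>
        \<le> (\<Sum>j'\<in>parent_positions d j. \<Sum>k'\<in>parent_positions d k. \<bar>corr \<theta> d j' k'\<bar>)"
      by (rule order_trans[OF sum_abs sum_mono[OF sum_abs]])
    also have "\<dots> \<le> (\<Sum>j'\<in>parent_positions d j. \<Sum>k'\<in>parent_positions d k. 1)"
      by (intro sum_mono Suc.IH) (use parent_positions_le j k in auto)
    finally have sum_le: "\<bar>\<Sum>j'\<in>parent_positions d j. \<Sum>k'\<in>parent_positions d k. corr \<theta> d j' k'\<bar> \<le> ?n"
      by simp
    have "?n > 0" using card_parent_positions_pos[OF j] card_parent_positions_pos[OF k] by simp
    then have "\<bar>corr \<theta> (Suc d) j k\<bar>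
        = (sin (2 * \<theta>))\<^sup>2 * (\<bar>\<Sum>j'\<in>parent_positions d j. \<Sum>k'\<in>parent_positions d k. corr \<theta> d j' k'\<bar> / ?n)"
      using corr_recursion[OF j k False, of \<theta>] by (simp add: abs_mult)
    also have "\<dots> \<le> 1 * 1"
      using sum_le \<open>?n > 0\<close> by (intro mult_mono) (simp_all add: sin_sq_le_one divide_le_eq)
    finally show ?thesis by simp
  qed
qed

lemma corr_eq_one:
  assumes "(sin (2 * \<theta>))\<^sup>2 = 1"
  shows "j \<le> d \<Longrightarrow> k \<le> d \<Longrightarrow> corr \<theta> d j k = 1"
proof (induction d arbitrary: j k)
  case 0
  then show ?case using corr_self[of 0 0 \<theta>] by simp
next
  case (Suc d)
  show ?case
  proof (cases "j = k")
    case True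
    then show ?thesis using corr_self Suc.prems by simp
  next
    case False
    have j: "j \<le> d + 1" and k: "k \<le> d + 1" using Suc.prems by auto
    have "(\<Sum>j'\<in>parent_positions d j. \<Sum>k'\<in>parent_positions d k. corr \<theta> d j' k')
        = (\<Sum>j'\<in>parent_positions d j. \<Sum>k'\<in>parent_positions d k. 1)"
      by (intro sum.cong refl Suc.IH) (use parent_positions_le j k in auto)
    then show ?thesis
      using corr_recursion[OF j k False, of \<theta>] assms card_parent_positions_pos[OF j] card_parent_positions_pos[OF k]
      by simp
  qed
qed

lemma corr_recursion_interior:
  assumes "1 \<le> j" "j \<le> d" "1 \<le> k" "k \<le> d" "j \<noteq> k"
  shows "corr \<theta> (d + 1) j k = (sin (2 * \<theta>))\<^sup>2
     * (corr \<theta> d (j - 1) (k - 1) + corr \<theta> d (j - 1) k + corr \<theta> d j (k - 1) + corr \<theta> d j k) / 4"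
proof -
  have "parent_positions d j = {j - 1, j}" "parent_positions d k = {k - 1, k}" "j - 1 \<noteq> j" "k - 1 \<noteq> k"
    using assms by (auto simp: parent_positions_def)
  then show ?thesis
    using corr_recursion[of j d k \<theta>] assms by (simp add: algebra_simps)
qed

lemma power_gap_recursion:
  fixes \<rho> s :: real
  assumes fixed_point: "s * (1 + \<rho>)\<^sup>2 = 4 * \<rho>" and "j \<noteq> k" "1 \<le> j" "1 \<le> k"
  shows "\<rho> ^ gap j k = s * (\<rho> ^ gap (j - 1) (k - 1) + \<rho> ^ gap (j - 1) k + \<rho> ^ gap j (k - 1) + \<rho> ^ gap j k) / 4"
proof -
  obtain n where n: "gap j k = n + 1" "gap (j - 1) (k - 1) = n + 1"
     "\<rho> ^ gap (j - 1) k + \<rho> ^ gap j (k - 1) = \<rho> ^ n + \<rho> ^ (n + 2)"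
  proof (cases "j < k")
    case True
    then have "gap j k = (k - j - 1) + 1" "gap (j - 1) (k - 1) = (k - j - 1) + 1"
      "gap (j - 1) k = (k - j - 1) + 2" "gap j (k - 1) = k - j - 1"
      using assms by (auto simp: gap_def)
    then show ?thesis by (intro that[of "k - j - 1"]) (simp_all add: add.commute)
  next
    case False
    then have "gap j k = (j - k - 1) + 1" "gap (j - 1) (k - 1) = (j - k - 1) + 1"
      "gap (j - 1) k = j - k - 1" "gap j (k - 1) = (j - k - 1) + 2"
      using assms by (auto simp: gap_def)
    then show ?thesis by (intro that[of "j - k - 1"]) simp_all
  qed
  have "s * (\<rho> ^ gap (j - 1) (k - 1) + \<rho> ^ gap (j - 1) k + \<rho> ^ gap j (k - 1) + \<rho> ^ gap j k) / 4
      = \<rho> ^ n * (s * (1 + \<rho>)\<^sup>2) / 4"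
    using n by (simp add: power2_eq_square algebra_simps)
  also have "\<dots> = \<rho> ^ (n + 1)" using fixed_point by simp
  finally show ?thesis using n by simp
qed

lemma abs_mean4_le:
  fixes s M a b c d :: real
  assumes "0 \<le> s" "\<bar>a\<bar> \<le> M" "\<bar>b\<bar> \<le> M" "\<bar>c\<bar> \<le> M" "\<bar>d\<bar> \<le> M"
  shows "\<bar>s * (a + b + c + d) / 4\<bar> \<le> s * M"
proof -
  have "\<bar>a + b + c + d\<bar> \<le> 4 * M" using assms(2-) by linarith
  then have "s * \<bar>a + b + c + d\<bar> \<le> s * (4 * M)" using assms(1) by (rule mult_left_mono)
  then show ?thesis using assms(1) by (simp add: abs_mult)
qed

lemma abs_corr_diff_le_two:
  assumes "j \<le> d" "k \<le> d" "0 \<le> \<rho>" "\<rho> \<le> 1"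
  shows "\<bar>corr \<theta> d j k - \<rho> ^ n\<bar> \<le> 2"
proof -
  have "\<bar>corr \<theta> d j k\<bar> \<le> 1" using abs_corr_le_one assms(1,2) by blast
  moreover have "0 \<le> \<rho> ^ n" "\<rho> ^ n \<le> 1" using assms(3,4) by (simp_all add: power_le_one)
  ultimately show ?thesis by linarith
qed

lemma edge_dist_parent_positions:
  assumes "1 \<le> j" "j \<le> d" "1 \<le> k" "k \<le> d" "j' \<in> {j - 1, j}" "k' \<in> {k - 1, k}"
  shows "edge_dist (Suc d) j k - 1 \<le> edge_dist d j' k'"
  using assms unfolding edge_dist_def by (auto simp: min_def max_def; arith)

text \<open>The recursion contracts errors by the factor sin (2 theta)^2 per level, and only the two
  ends of a level, whose sites have a single parent, deviate from the interior recursion.\<close>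
lemma corr_approx:
  fixes \<rho> \<theta> :: real
  defines "s \<equiv> (sin (2 * \<theta>))\<^sup>2"
  assumes "0 \<le> \<rho>" "\<rho> \<le> 1" and fixed_point: "s * (1 + \<rho>)\<^sup>2 = 4 * \<rho>"
  shows "j \<le> d \<Longrightarrow> k \<le> d \<Longrightarrow> \<bar>corr \<theta> d j k - \<rho> ^ gap j k\<bar> \<le> 2 * s ^ edge_dist d j k"
proof (induction d arbitrary: j k)
  case 0
  then show ?case using corr_self[of 0 0 \<theta>] by (simp add: gap_def edge_dist_def)
next
  case (Suc d)
  have s: "0 \<le> s" "s \<le> 1" by (simp_all add: s_def sin_sq_le_one)
  show ?case
  proof (cases "j = k")
    case True
    then show ?thesis using corr_self Suc.prems s by (simp add: gap_def)
  next
    case jk: False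
    show ?thesis
    proof (cases "edge_dist (Suc d) j k = 0")
      case True
      then show ?thesis using abs_corr_diff_le_two[OF Suc.prems assms(2,3)] by simp
    next
      case False
      define m where "m = edge_dist (Suc d) j k"
      have range: "1 \<le> j" "j \<le> d" "1 \<le> k" "k \<le> d" "1 \<le> m"
        using False Suc.prems by (auto simp: edge_dist_def m_def)
      let ?err = "\<lambda>j' k'. corr \<theta> d j' k' - \<rho> ^ gap j' k'"
      have IH: "\<bar>?err j' k'\<bar> \<le> 2 * s ^ (m - 1)" if "j' \<in> {j - 1, j}" "k' \<in> {k - 1, k}" for j' k'
      proof -
        have "s ^ edge_dist d j' k' \<le> s ^ (m - 1)"
          using s edge_dist_parent_positions[OF range(1-4) that] by (simp add: m_def power_decreasing)
        then show ?thesis using Suc.IH[of j' k'] that range by fastforce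
      qed
      have "corr \<theta> (Suc d) j k - \<rho> ^ gap j k
          = s * (?err (j - 1) (k - 1) + ?err (j - 1) k + ?err j (k - 1) + ?err j k) / 4"
        using corr_recursion_interior[OF range(1-4) jk, of \<theta>] power_gap_recursion[OF fixed_point jk range(1,3)]
        by (simp add: s_def algebra_simps)
      also have "\<bar>\<dots>\<bar> \<le> s * (2 * s ^ (m - 1))"
        by (intro abs_mean4_le s IH) auto
      also have "\<dots> = 2 * s ^ m"
        using range(5) by (cases m) auto
      finally show ?thesis by (simp add: m_def)
    qed
  qed
qed

section \<open>The boundary sites and the limit\<close>

text \<open>The mean of cos (2 angle) at a site with two parents whose spins have correlation c: the
  angle is theta times the mean parent spin.\<close>
definition mean_cos_angle :: "real \<Rightarrow> real \<Rightarrow> real" where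
  "mean_cos_angle \<theta> c = (1 + cos (2 * \<theta>)) / 2 - (1 - cos (2 * \<theta>)) / 2 * c"

text \<open>A site on an edge of the lattice has a single parent; it behaves like a site with two
  perfectly correlated parents.\<close>
definition parent_corr :: "real \<Rightarrow> site \<Rightarrow> real" where
  "parent_corr \<theta> i = (if fst i = 0 \<or> snd i = 0 then 1 else corr \<theta> (level i - 1) (fst i - 1) (fst i))"

lemma cos_two_angle_spins:
  "cos (2 * (\<theta> / 2 * (spin b1 + spin b2))) = mean_cos_angle \<theta> (spin b1 * spin b2)"
  by (cases b1; cases b2) (simp_all add: mean_cos_angle_def spin_def field_simps)

lemma mean_cos_angle_one: "mean_cos_angle \<theta> 1 = cos (2 * \<theta>)"
  by (simp add: mean_cos_angle_def field_simps)

lemma sum_mean_cos_angle: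
  assumes "finite V" "parent_closed parents V"
  shows "(\<Sum>x\<in>configs_on V. mean_cos_angle \<theta> (G x) * (\<Prod>w\<in>V. cond_prob \<theta> w x))
       = mean_cos_angle \<theta> (\<Sum>x\<in>configs_on V. G x * (\<Prod>w\<in>V. cond_prob \<theta> w x))"
proof -
  have "(\<Sum>x\<in>configs_on V. mean_cos_angle \<theta> (G x) * (\<Prod>w\<in>V. cond_prob \<theta> w x))
      = (\<Sum>x\<in>configs_on V. (1 + cos (2 * \<theta>)) / 2 * (\<Prod>w\<in>V. cond_prob \<theta> w x)
          - (1 - cos (2 * \<theta>)) / 2 * (G x * (\<Prod>w\<in>V. cond_prob \<theta> w x)))"
    by (simp add: mean_cos_angle_def left_diff_distrib mult.assoc)
  also have "\<dots> = (1 + cos (2 * \<theta>)) / 2 * (\<Sum>x\<in>configs_on V. \<Prod>w\<in>V. cond_prob \<theta> w x)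
        - (1 - cos (2 * \<theta>)) / 2 * (\<Sum>x\<in>configs_on V. G x * (\<Prod>w\<in>V. cond_prob \<theta> w x))"
    by (simp only: sum_subtractf sum_distrib_left)
  finally show ?thesis
    using sum_cond_prob_one[OF assms] by (simp add: mean_cos_angle_def)
qed

lemma cos_double_angle_eq:
  assumes "i \<noteq> (0, 0)"
  shows "cos (2 * angle \<theta> i x) = mean_cos_angle \<theta>
    (if fst i = 0 \<or> snd i = 0 then 1 else spin (x (fst i - 1, snd i)) * spin (x (fst i, snd i - 1)))"
proof (cases "fst i = 0 \<or> snd i = 0")
  case True
  with assms have "cos (2 * angle \<theta> i x) = cos (2 * \<theta>)"
    by (cases i; cases "x (fst i - 1, snd i)"; cases "x (fst i, snd i - 1)")
      (auto simp: angle_def in_edges_def indeg_def spin_def)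
  with True show ?thesis
    by (simp add: mean_cos_angle_one)
next
  case False
  then have "angle \<theta> i x = \<theta> / 2 * (spin (x (fst i - 1, snd i)) + spin (x (fst i, snd i - 1)))"
    by (cases i) (simp add: angle_def in_edges_def indeg_def Let_def)
  with False show ?thesis
    by (simp only: cos_two_angle_spins if_False)
qed

lemma sum_cos_double_angle:
  assumes "i \<noteq> (0, 0)"
  shows "(\<Sum>x\<in>configs_on (quadrant i - {i}). cos (2 * angle \<theta> i x) * (\<Prod>w\<in>quadrant i - {i}. cond_prob \<theta> w x))
       = mean_cos_angle \<theta> (parent_corr \<theta> i)"
proof -
  define V where "V = quadrant i - {i}"
  have V: "finite V" "parent_closed parents V"
    using finite_quadrant parent_closed_quadrant_minus by (simp_all add: V_def)
  show ?thesis
  proof (cases "fst i = 0 \<or> snd i = 0")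
    case True
    then show ?thesis
      using sum_mean_cos_angle[OF V, of \<theta> "\<lambda>_. 1"] sum_cond_prob_one[OF V, of \<theta>]
      by (simp add: cos_double_angle_eq[OF assms] parent_corr_def V_def)
  next
    case False
    define d where "d = level i - 1"
    have sites: "level_site d (fst i - 1) = (fst i - 1, snd i)" "level_site d (fst i) = (fst i, snd i - 1)"
      using False by (auto simp: level_site_def d_def level_def)
    have "(\<Sum>x\<in>configs_on V. spin (x (fst i - 1, snd i)) * spin (x (fst i, snd i - 1)) * (\<Prod>w\<in>V. cond_prob \<theta> w x))
        = corr \<theta> d (fst i - 1) (fst i)"
      unfolding sites[symmetric]
      by (rule corr_eq_on[OF V]) (use False in \<open>auto simp: level_site_def V_def quadrant_def d_def level_def prod_eq_iff\<close>)
    then show ?thesis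
      using False sum_mean_cos_angle[OF V, of \<theta> "\<lambda>x. spin (x (fst i - 1, snd i)) * spin (x (fst i, snd i - 1))"]
      by (simp add: cos_double_angle_eq[OF assms] parent_corr_def V_def d_def)
  qed
qed

lemma prod_child_factor_single_child:
  assumes "c \<in> lattice L - quadrant i" "i \<in> parents c" "indeg c = 2"
    and "\<And>v. v \<in> lattice L - quadrant i \<Longrightarrow> v \<noteq> c \<Longrightarrow> i \<notin> parents v"
  shows "(\<Prod>v\<in>lattice L - quadrant i. child_factor \<theta> i v) = cos \<theta>"
proof -
  have "(\<Prod>v\<in>lattice L - quadrant i. child_factor \<theta> i v)
      = child_factor \<theta> i c * (\<Prod>v\<in>lattice L - quadrant i - {c}. child_factor \<theta> i v)"
    using assms(1) by (simp add: prod.remove)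
  also have "(\<Prod>v\<in>lattice L - quadrant i - {c}. child_factor \<theta> i v) = 1"
    using assms(4) by (intro prod.neutral) (auto simp: child_factor_def)
  finally show ?thesis using assms(2,3) by (simp add: child_factor_def)
qed

lemma boundary'_eq:
  "boundary' L = (\<lambda>b. (L - 1, b)) ` {..L - 2} \<union> (\<lambda>a. (a, L - 1)) ` {..L - 2}"
  by (auto simp: boundary'_def)

text \<open>Every site of B' has exactly one child in the lattice, and it has two parents.\<close>
theorem expect_pauliX_boundary:
  assumes "2 \<le> L" "i \<in> boundary' L"
  shows "expect L (whip_state L \<theta>) (pauliX i) = complex_of_real (cos \<theta> * mean_cos_angle \<theta> (parent_corr \<theta> i))"
proof -
  obtain c where c: "c \<in> lattice L - quadrant i" "i \<in> parents c" "indeg c = 2"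
    "\<And>v. v \<in> lattice L - quadrant i \<Longrightarrow> v \<noteq> c \<Longrightarrow> i \<notin> parents v"
  proof (cases "fst i = L - 1")
    case True
    then show ?thesis
      using assms by (intro that[of "(L - 1, snd i + 1)"])
        (auto simp: boundary'_def lattice_def quadrant_def parents_iff indeg_def)
  next
    case False
    then show ?thesis
      using assms by (intro that[of "(fst i + 1, L - 1)"])
        (auto simp: boundary'_def lattice_def quadrant_def parents_iff indeg_def)
  qed
  have "i \<in> lattice L" "i \<noteq> (0, 0)"
    using assms by (auto simp: boundary'_def lattice_def)
  then show ?thesis
    unfolding expect_pauliX_quadrant[OF \<open>i \<in> lattice L\<close>] sum_cos_double_angle[OF \<open>i \<noteq> (0, 0)\<close>]
    using prod_child_factor_single_child[OF c] by simp
qed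

definition corr_ratio :: "real \<Rightarrow> real" where
  "corr_ratio \<theta> = (1 - \<bar>cos (2 * \<theta>)\<bar>) / (1 + \<bar>cos (2 * \<theta>)\<bar>)"

text \<open>Rate at which the correlations approach their limit; when sin (2 theta)^2 = 1 there is
  nothing to approach, as all correlations and corr_ratio are then 1.\<close>
definition decay :: "real \<Rightarrow> real" where
  "decay \<theta> = (if (sin (2 * \<theta>))\<^sup>2 < 1 then (sin (2 * \<theta>))\<^sup>2 else 0)"

definition whip_limit :: "real \<Rightarrow> real" where
  "whip_limit \<theta> = cos \<theta> * mean_cos_angle \<theta> (corr_ratio \<theta>)"

lemma corr_ratio_bounds: "0 \<le> corr_ratio \<theta>" "corr_ratio \<theta> \<le> 1"
  by (simp_all add: corr_ratio_def divide_le_eq)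

lemma corr_ratio_fixed_point: "(sin (2 * \<theta>))\<^sup>2 * (1 + corr_ratio \<theta>)\<^sup>2 = 4 * corr_ratio \<theta>"
proof -
  define c where "c = \<bar>cos (2 * \<theta>)\<bar>"
  have c: "0 \<le> c" by (simp add: c_def)
  have s: "(sin (2 * \<theta>))\<^sup>2 = (1 - c) * (1 + c)"
    unfolding c_def by (simp add: sin_squared_eq power2_eq_square algebra_simps)
  have r: "corr_ratio \<theta> = (1 - c) / (1 + c)"
    unfolding c_def corr_ratio_def ..
  have "1 + (1 - c) / (1 + c) = 2 / (1 + c)"
    using c by (simp add: field_simps)
  then show ?thesis
    unfolding s r using c by (simp add: power2_eq_square)
qed

lemma decay_bounds: "0 \<le> decay \<theta>" "decay \<theta> < 1"
  by (auto simp: decay_def)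

lemma corr_adjacent_approx:
  assumes "j \<le> d" "k \<le> d" "gap j k = 1"
  shows "\<bar>corr \<theta> d j k - corr_ratio \<theta>\<bar> \<le> 2 * decay \<theta> ^ edge_dist d j k"
proof (cases "(sin (2 * \<theta>))\<^sup>2 < 1")
  case True
  then show ?thesis
    using corr_approx[OF corr_ratio_bounds corr_ratio_fixed_point assms(1,2)] assms(3)
    by (simp add: decay_def)
next
  case False
  then have s: "(sin (2 * \<theta>))\<^sup>2 = 1" using sin_sq_le_one[of "2 * \<theta>"] by linarith
  then have "(corr_ratio \<theta> - 1)\<^sup>2 = 0"
    using corr_ratio_fixed_point[of \<theta>] by (simp add: power2_eq_square algebra_simps)
  then show ?thesis
    using corr_eq_one[OF s assms(1,2)] decay_bounds[of \<theta>] by simp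
qed

text \<open>On an edge of the lattice the exponent is 0, by truncated subtraction.\<close>
lemma parent_corr_approx:
  "\<bar>parent_corr \<theta> i - corr_ratio \<theta>\<bar> \<le> 2 * decay \<theta> ^ (min (fst i) (snd i) - 1)"
proof (cases "fst i = 0 \<or> snd i = 0")
  case True
  then show ?thesis using corr_ratio_bounds[of \<theta>] by (auto simp: parent_corr_def)
next
  case False
  then have "fst i - 1 \<le> level i - 1" "fst i \<le> level i - 1" "gap (fst i - 1) (fst i) = 1"
    and "edge_dist (level i - 1) (fst i - 1) (fst i) = min (fst i) (snd i) - 1"
    by (auto simp: edge_dist_def level_def gap_def)
  then show ?thesis
    using False corr_adjacent_approx[of "fst i - 1" "level i - 1" "fst i" \<theta>]
    by (simp add: parent_corr_def)
qed

lemma sum_power_pred_le: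
  fixes E :: real
  assumes "0 \<le> E" "E < 1"
  shows "(\<Sum>b\<le>n. E ^ (b - 1)) \<le> 1 + 1 / (1 - E)"
proof (cases n)
  case (Suc m)
  have "(\<Sum>b\<le>m. E ^ b) \<le> (\<Sum>b. E ^ b)"
    using assms by (intro sum_le_suminf summable_geometric) auto
  then show ?thesis
    unfolding Suc sum.atMost_Suc_shift using assms by (simp add: suminf_geometric)
qed (use assms in simp)

lemma boundary'_disjoint:
  "2 \<le> (L::nat) \<Longrightarrow> (\<lambda>b. (L - 1, b)) ` {..L - 2} \<inter> (\<lambda>a. (a, L - 1)) ` {..L - 2} = {}"
  by auto

lemma sum_boundary':
  assumes "2 \<le> L"
  shows "(\<Sum>i\<in>boundary' L. f i) = (\<Sum>b\<le>L - 2. f (L - 1, b)) + (\<Sum>a\<le>L - 2. f (a, L - 1))"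
  unfolding boundary'_eq
  by (subst sum.union_disjoint) (use assms in \<open>auto simp: boundary'_disjoint sum.reindex inj_on_def\<close>)

lemma card_boundary':
  assumes "2 \<le> L"
  shows "card (boundary' L) = 2 * L - 2"
proof -
  have "card (boundary' L) = (\<Sum>i\<in>boundary' L. 1)"
    by simp
  also have "\<dots> = (\<Sum>b\<le>L - 2. 1) + (\<Sum>a\<le>L - 2. 1)"
    by (rule sum_boundary'[OF assms])
  finally show ?thesis
    using assms by simp
qed

lemma sum_parent_corr_deviation:
  assumes "2 \<le> L"
  shows "(\<Sum>i\<in>boundary' L. \<bar>parent_corr \<theta> i - corr_ratio \<theta>\<bar>) \<le> 4 * (1 + 1 / (1 - decay \<theta>))"
proof -
  have side: "(\<Sum>b\<le>L - 2. \<bar>parent_corr \<theta> (f b) - corr_ratio \<theta>\<bar>) \<le> 2 * (1 + 1 / (1 - decay \<theta>))"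
    if "\<And>b. b \<le> L - 2 \<Longrightarrow> min (fst (f b)) (snd (f b)) = b" for f
  proof -
    have "(\<Sum>b\<le>L - 2. \<bar>parent_corr \<theta> (f b) - corr_ratio \<theta>\<bar>) \<le> (\<Sum>b\<le>L - 2. 2 * decay \<theta> ^ (b - 1))"
      proof (rule sum_mono)
      fix b assume "b \<in> {..L - 2}"
      then show "\<bar>parent_corr \<theta> (f b) - corr_ratio \<theta>\<bar> \<le> 2 * decay \<theta> ^ (b - 1)"
        using parent_corr_approx[of \<theta> "f b"] that[of b] by simp
    qed
    also have "\<dots> = 2 * (\<Sum>b\<le>L - 2. decay \<theta> ^ (b - 1))"
      by (simp add: sum_distrib_left)
    also have "\<dots> \<le> 2 * (1 + 1 / (1 - decay \<theta>))"
      using sum_power_pred_le[OF decay_bounds] by (intro mult_left_mono) auto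
    finally show ?thesis .
  qed
  have "(\<Sum>b\<le>L - 2. \<bar>parent_corr \<theta> (L - 1, b) - corr_ratio \<theta>\<bar>) \<le> 2 * (1 + 1 / (1 - decay \<theta>))"
    using side[of "\<lambda>b. (L - 1, b)"] assms by simp
  moreover have "(\<Sum>a\<le>L - 2. \<bar>parent_corr \<theta> (a, L - 1) - corr_ratio \<theta>\<bar>) \<le> 2 * (1 + 1 / (1 - decay \<theta>))"
    using side[of "\<lambda>a. (a, L - 1)"] assms by simp
  ultimately show ?thesis
    unfolding sum_boundary'[OF assms] by simp
qed

lemma boundaryX_eq:
  assumes "2 \<le> L"
  shows "boundaryX L \<theta> = complex_of_real (\<Sum>i\<in>boundary' L. cos \<theta> * mean_cos_angle \<theta> (parent_corr \<theta> i))"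
  unfolding boundaryX_def of_real_sum
  by (rule sum.cong[OF refl]) (rule expect_pauliX_boundary[OF assms])

lemma boundaryX_deviation:
  assumes "2 \<le> L"
  shows "\<bar>(\<Sum>i\<in>boundary' L. cos \<theta> * mean_cos_angle \<theta> (parent_corr \<theta> i)) - real (2 * L - 2) * whip_limit \<theta>\<bar>
    \<le> \<bar>cos \<theta>\<bar> * (1 - cos (2 * \<theta>)) / 2 * (4 * (1 + 1 / (1 - decay \<theta>)))"
proof -
  let ?A = "\<bar>cos \<theta>\<bar> * (1 - cos (2 * \<theta>)) / 2"
  have deviation: "\<bar>cos \<theta> * mean_cos_angle \<theta> c - whip_limit \<theta>\<bar> = ?A * \<bar>c - corr_ratio \<theta>\<bar>" for c
  proof -
    have "cos \<theta> * mean_cos_angle \<theta> c - whip_limit \<theta> = - (cos \<theta> * ((1 - cos (2 * \<theta>)) / 2)) * (c - corr_ratio \<theta>)"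
      by (simp add: whip_limit_def mean_cos_angle_def right_diff_distrib left_diff_distrib mult.assoc)
    then show ?thesis by (simp add: abs_mult)
  qed
  have "(\<Sum>i\<in>boundary' L. cos \<theta> * mean_cos_angle \<theta> (parent_corr \<theta> i)) - real (2 * L - 2) * whip_limit \<theta>
      = (\<Sum>i\<in>boundary' L. cos \<theta> * mean_cos_angle \<theta> (parent_corr \<theta> i) - whip_limit \<theta>)"
    by (simp add: sum_subtractf card_boundary'[OF assms])
  also have "\<bar>\<dots>\<bar> \<le> (\<Sum>i\<in>boundary' L. ?A * \<bar>parent_corr \<theta> i - corr_ratio \<theta>\<bar>)"
    unfolding deviation[symmetric] by (rule sum_abs)
  also have "\<dots> \<le> ?A * (4 * (1 + 1 / (1 - decay \<theta>)))"
    unfolding sum_distrib_left[symmetric]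
    by (rule mult_left_mono[OF sum_parent_corr_deviation[OF assms]]) simp
  finally show ?thesis .
qed

lemma tendsto_div_of_bounded_deviation:
  fixes S :: "nat \<Rightarrow> real" and c :: "nat \<Rightarrow> nat"
  assumes bound: "\<And>n. N \<le> n \<Longrightarrow> \<bar>S n - real (c n) * l\<bar> \<le> K" and c: "filterlim c at_top sequentially"
  shows "(\<lambda>n. S n / real (c n)) \<longlonglongrightarrow> l"
proof -
  have real_c: "filterlim (\<lambda>n. real (c n)) at_top sequentially"
    by (rule filterlim_compose[OF filterlim_real_sequentially c])
  have "(\<lambda>n. 1 / real (c n)) \<longlonglongrightarrow> 0"
    by (rule tendsto_divide_0[OF tendsto_const filterlim_at_top_imp_at_infinity[OF real_c]])
  moreover have "\<forall>\<^sub>F n in sequentially. norm (S n / real (c n) - l) \<le> norm (1 / real (c n)) * K"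
    using eventually_ge_at_top[of N] filterlim_at_top_dense[THEN iffD1, OF real_c, rule_format, of 0]
  proof eventually_elim
    case (elim n)
    then have "S n / real (c n) - l = (S n - real (c n) * l) / real (c n)"
      by (simp add: field_simps)
    then show ?case
      using bound[OF elim(1)] elim(2) by (simp add: divide_right_mono)
  qed
  ultimately have "(\<lambda>n. S n / real (c n) - l) \<longlonglongrightarrow> 0"
    by (rule tendsto_0_le)
  then show ?thesis by (simp add: LIM_zero_iff)
qed

theorem boundaryX_limit:
  "(\<lambda>L. boundaryX L \<theta> / of_nat (2 * L - 2)) \<longlonglongrightarrow> complex_of_real (whip_limit \<theta>)"
proof -
  define S where "S L = (\<Sum>i\<in>boundary' L. cos \<theta> * mean_cos_angle \<theta> (parent_corr \<theta> i))" for L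
  define K where "K = \<bar>cos \<theta>\<bar> * (1 - cos (2 * \<theta>)) / 2 * (4 * (1 + 1 / (1 - decay \<theta>)))"
  have deviation: "\<bar>S L - real (2 * L - 2) * whip_limit \<theta>\<bar> \<le> K" if "2 \<le> L" for L
    using boundaryX_deviation[OF that] unfolding S_def K_def .
  have "filterlim (\<lambda>L::nat. 2 * L - 2) at_top sequentially"
    unfolding filterlim_at_top
  proof
    fix Z :: nat
    show "\<forall>\<^sub>F L in sequentially. Z \<le> 2 * L - 2"
      using eventually_ge_at_top[of "Z + 2"] by eventually_elim simp
  qed
  then have "(\<lambda>L. S L / real (2 * L - 2)) \<longlonglongrightarrow> whip_limit \<theta>"
    using tendsto_div_of_bounded_deviation[of 2 S "\<lambda>L. 2 * L - 2", OF deviation] by simp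
  then have "(\<lambda>L. complex_of_real (S L / real (2 * L - 2))) \<longlonglongrightarrow> complex_of_real (whip_limit \<theta>)"
    by (rule tendsto_of_real)
  moreover have "\<forall>\<^sub>F L in sequentially. complex_of_real (S L / real (2 * L - 2)) = boundaryX L \<theta> / of_nat (2 * L - 2)"
    using eventually_ge_at_top[of 2] by eventually_elim (simp add: boundaryX_eq S_def)
  ultimately show ?thesis
    by (rule Lim_transform_eventually)
qed

lemma whip_limit_eq:
  assumes "cos \<theta> \<noteq> 0"
  shows "whip_limit \<theta> = (cos (2 * \<theta>) + \<bar>cos (2 * \<theta>)\<bar>) / (2 * cos \<theta>)"
proof -
  define c where "c = cos (2 * \<theta>)"
  have cos_sq: "1 + c = 2 * (cos \<theta> * cos \<theta>)"
    unfolding c_def cos_double_cos by (simp add: power2_eq_square)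
  have "-1 \<le> c" "c \<le> 1" by (simp_all add: c_def)
  show ?thesis
  proof (cases "0 \<le> c")
    case True
    then have r: "corr_ratio \<theta> = (1 - c) / (1 + c)" and pos: "1 + c > 0"
      by (simp_all add: corr_ratio_def c_def)
    have "mean_cos_angle \<theta> (corr_ratio \<theta>) = (1 + c) / 2 - (1 - c) / 2 * ((1 - c) / (1 + c))"
      unfolding mean_cos_angle_def c_def[symmetric] r ..
    also have "\<dots> = 2 * c / (1 + c)"
      using pos by (simp add: field_simps power2_eq_square)
    finally have "whip_limit \<theta> = c / cos \<theta>"
      using assms unfolding whip_limit_def cos_sq by (simp add: field_simps)
    then show ?thesis using True assms by (simp add: c_def field_simps)
  next
    case False
    then have r: "corr_ratio \<theta> = (1 + c) / (1 - c)" and pos: "1 - c > 0"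
      by (simp_all add: corr_ratio_def c_def)
    have "mean_cos_angle \<theta> (corr_ratio \<theta>) = (1 + c) / 2 - (1 - c) / 2 * ((1 + c) / (1 - c))"
      unfolding mean_cos_angle_def c_def[symmetric] r ..
    also have "\<dots> = 0"
      using pos by (simp add: field_simps)
    finally show ?thesis using False by (simp add: whip_limit_def c_def)
  qed
qed

lemma whip_limit_eq_0_iff: "whip_limit \<theta> = 0 \<longleftrightarrow> cos (2 * \<theta>) \<le> 0"
proof (cases "cos \<theta> = 0")
  case True
  then have "cos (2 * \<theta>) = -1" by (simp add: cos_double_cos)
  with True show ?thesis by (simp add: whip_limit_def)
next
  case False
  then show ?thesis using whip_limit_eq[OF False] by (auto simp: abs_if)
qed

lemma cos_nonpos_iff: "cos y \<le> 0 \<longleftrightarrow> (\<exists>k::int. pi / 2 + 2 * pi * k \<le> y \<and> y \<le> 3 * pi / 2 + 2 * pi * k)"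
proof
  assume "cos y \<le> 0"
  define k where "k = \<lceil>(y - 3 * pi / 2) / (2 * pi)\<rceil>"
  define y' where "y' = y - 2 * pi * real_of_int k"
  have "(y - 3 * pi / 2) / (2 * pi) \<le> real_of_int k" "real_of_int k < (y - 3 * pi / 2) / (2 * pi) + 1"
    unfolding k_def by linarith+
  then have y': "- (pi / 2) < y'" "y' \<le> 3 * pi / 2"
    unfolding y'_def using pi_gt_zero by (simp_all add: field_simps)
  have "cos y' \<le> 0"
    using \<open>cos y \<le> 0\<close> by (simp add: y'_def cos_diff)
  have "pi / 2 \<le> y'"
  proof (rule ccontr)
    assume "\<not> pi / 2 \<le> y'"
    then have "0 < cos y'" using y' by (intro cos_gt_zero_pi) auto
    with \<open>cos y' \<le> 0\<close> show False by simp
  qed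
  then show "\<exists>k::int. pi / 2 + 2 * pi * k \<le> y \<and> y \<le> 3 * pi / 2 + 2 * pi * k"
    using y' by (intro exI[of _ k]) (simp add: y'_def)
next
  assume "\<exists>k::int. pi / 2 + 2 * pi * k \<le> y \<and> y \<le> 3 * pi / 2 + 2 * pi * k"
  then obtain k :: int where k: "pi / 2 + 2 * pi * k \<le> y" "y \<le> 3 * pi / 2 + 2 * pi * k"
    by blast
  define y' where "y' = y - 2 * pi * real_of_int k"
  have "0 \<le> cos (y' - pi)"
    using k by (intro cos_ge_zero) (simp_all add: y'_def)
  then show "cos y \<le> 0"
    by (simp add: y'_def cos_diff)
qed

lemma cos_double_nonpos_iff_int:
  "cos (2 * \<theta>) \<le> 0 \<longleftrightarrow> (\<exists>k::int. pi / 4 + pi * k \<le> \<theta> \<and> \<theta> \<le> 3 * pi / 4 + pi * k)"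
proof -
  have "pi / 2 + 2 * pi * k \<le> 2 * \<theta> \<and> 2 * \<theta> \<le> 3 * pi / 2 + 2 * pi * k
      \<longleftrightarrow> pi / 4 + pi * k \<le> \<theta> \<and> \<theta> \<le> 3 * pi / 4 + pi * k" for k :: real
    by linarith
  then show ?thesis
    unfolding cos_nonpos_iff by presburger
qed

lemma exists_int_split_parity:
  "(\<exists>k::int. pi / 4 + pi * k \<le> \<theta> \<and> \<theta> \<le> 3 * pi / 4 + pi * k) \<longleftrightarrow> (\<exists>k::int.
     (pi / 4 + 2 * pi * k \<le> \<theta> \<and> \<theta> \<le> 3 * pi / 4 + 2 * pi * k)
   \<or> (- 3 * pi / 4 + 2 * pi * k \<le> \<theta> \<and> \<theta> \<le> - pi / 4 + 2 * pi * k))"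
proof
  assume "\<exists>k::int. pi / 4 + pi * k \<le> \<theta> \<and> \<theta> \<le> 3 * pi / 4 + pi * k"
  then obtain k :: int where k: "pi / 4 + pi * k \<le> \<theta>" "\<theta> \<le> 3 * pi / 4 + pi * k"
    by blast
  consider m where "k = 2 * m" | m where "k = 2 * m - 1"
    by (metis even_two_times_div_two odd_two_times_div_two_succ add_diff_cancel_right')
  then show "\<exists>k::int. (pi / 4 + 2 * pi * k \<le> \<theta> \<and> \<theta> \<le> 3 * pi / 4 + 2 * pi * k)
     \<or> (- 3 * pi / 4 + 2 * pi * k \<le> \<theta> \<and> \<theta> \<le> - pi / 4 + 2 * pi * k)"
  proof cases
    case (1 m)
    then have "pi * real_of_int k = 2 * pi * real_of_int m" by simp
    then show ?thesis using k by (intro exI[of _ m] disjI1) linarith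
  next
    case (2 m)
    then have km: "real_of_int k = 2 * real_of_int m - 1" by simp
    have "pi * real_of_int k = 2 * pi * real_of_int m - pi"
      unfolding km by (simp add: algebra_simps)
    then show ?thesis using k by (intro exI[of _ m] disjI2) linarith
  qed
next
  assume "\<exists>k::int. (pi / 4 + 2 * pi * k \<le> \<theta> \<and> \<theta> \<le> 3 * pi / 4 + 2 * pi * k)
     \<or> (- 3 * pi / 4 + 2 * pi * k \<le> \<theta> \<and> \<theta> \<le> - pi / 4 + 2 * pi * k)"
  then obtain m :: int where m: "(pi / 4 + 2 * pi * m \<le> \<theta> \<and> \<theta> \<le> 3 * pi / 4 + 2 * pi * m)
     \<or> (- 3 * pi / 4 + 2 * pi * m \<le> \<theta> \<and> \<theta> \<le> - pi / 4 + 2 * pi * m)"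
    by blast
  from m show "\<exists>k::int. pi / 4 + pi * k \<le> \<theta> \<and> \<theta> \<le> 3 * pi / 4 + pi * k"
  proof
    assume "pi / 4 + 2 * pi * m \<le> \<theta> \<and> \<theta> \<le> 3 * pi / 4 + 2 * pi * m"
    moreover have "pi * real_of_int (2 * m) = 2 * pi * real_of_int m" by simp
    ultimately show ?thesis by (intro exI[of _ "2 * m"]) linarith
  next
    assume "- 3 * pi / 4 + 2 * pi * m \<le> \<theta> \<and> \<theta> \<le> - pi / 4 + 2 * pi * m"
    moreover have "pi * real_of_int (2 * m - 1) = 2 * pi * real_of_int m - pi" by (simp add: algebra_simps)
    ultimately show ?thesis by (intro exI[of _ "2 * m - 1"]) linarith
  qed
qed

theorem mainTheorem10:
  fixes \<theta> :: real
  shows "\<exists>l::real.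
     ((\<lambda>L. boundaryX L \<theta> / of_nat (2 * L - 2)) \<longlonglongrightarrow> complex_of_real l)
     \<and> (cos \<theta> \<noteq> 0 \<longrightarrow> l = (cos (2 * \<theta>) + \<bar>cos (2 * \<theta>)\<bar>) / (2 * cos \<theta>))
     \<and> (cos \<theta> = 0 \<longrightarrow> l = 0)
     \<and> (l = 0 \<longleftrightarrow> (\<exists>k::int.
            (pi / 4 + 2 * pi * k \<le> \<theta> \<and> \<theta> \<le> 3 * pi / 4 + 2 * pi * k)
          \<or> (- 3 * pi / 4 + 2 * pi * k \<le> \<theta> \<and> \<theta> \<le> - pi / 4 + 2 * pi * k)))"
proof (intro exI[of _ "whip_limit \<theta>"] conjI impI)
  show "(\<lambda>L. boundaryX L \<theta> / of_nat (2 * L - 2)) \<longlonglongrightarrow> complex_of_real (whip_limit \<theta>)"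
    by (rule boundaryX_limit)
  show "whip_limit \<theta> = (cos (2 * \<theta>) + \<bar>cos (2 * \<theta>)\<bar>) / (2 * cos \<theta>)" if "cos \<theta> \<noteq> 0"
    using that by (rule whip_limit_eq)
  show "whip_limit \<theta> = 0" if "cos \<theta> = 0"
    using that by (simp add: whip_limit_def)
  show "whip_limit \<theta> = 0 \<longleftrightarrow> (\<exists>k::int.
            (pi / 4 + 2 * pi * k \<le> \<theta> \<and> \<theta> \<le> 3 * pi / 4 + 2 * pi * k)
          \<or> (- 3 * pi / 4 + 2 * pi * k \<le> \<theta> \<and> \<theta> \<le> - pi / 4 + 2 * pi * k))"
    unfolding whip_limit_eq_0_iff cos_double_nonpos_iff_int by (rule exists_int_split_parity)
qed

end
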